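(* Let $h(x,y)$ be a real analytic function on an open disk $\Omega$ centered at $(0,0)$, not affine-linear, with $h_{xx}h_{yy}-h_{xy}^2\le 0$ on $\Omega$, $h(0,0)=0$ and $\nabla h(0,0)=(0,0)$. Let $\Gamma\subset\Omega$ be a line segment through the origin along which $D^2h$ vanishes identically. Then for every direction $\nu\in\mathbb{S}^1$ transverse to $\Gamma$, the function $h_\nu=\langle\nabla h,\nu\rangle$ does not have $\nabla h_\nu\equiv(0,0)$ on $\Omega$, and (after shrinking $\Omega$ if needed) the line field generated by $\nabla h_\nu$ extends real analytically across $\Gamma\setminus\{(0,0)\}$ in such a way that at every point $p\in\Gamma\setminus\{(0,0)\}$ the extended line is orthogonal to $\Gamma$.
   Context: A line field is a continuous assignment to each point of a line through the origin of the tangent plane; the line field generated by a vector field $V$ assigns to each point $p$ with $V(p)\neq0$ the line spanned by $V(p)$. *)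

theory Defs
  imports "HOL-Analysis.Analysis"
begin

text \<open>Real analyticity of a scalar function of two real variables on a set U:
  near every point of U the function is the sum of an (absolutely, i.e.
  unconditionally) convergent double power series.\<close>
definition real_analytic_on2 :: "(real \<times> real \<Rightarrow> real) \<Rightarrow> (real \<times> real) set \<Rightarrow> bool" where
  "real_analytic_on2 f U \<longleftrightarrow>
     (\<forall>p\<in>U. \<exists>r>0. ball p r \<subseteq> U \<and> (\<exists>a :: nat \<Rightarrow> nat \<Rightarrow> real.
        \<forall>q\<in>ball p r.
          ((\<lambda>(i,j). a i j * (fst q - fst p) ^ i * (snd q - snd p) ^ j) has_sum f q) UNIV))"

definition real_analytic_vf_on :: "(real \<times> real \<Rightarrow> real \<times> real) \<Rightarrow> (real \<times> real) set \<Rightarrow> bool" where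
  "real_analytic_vf_on W U \<longleftrightarrow>
     real_analytic_on2 (\<lambda>q. fst (W q)) U \<and> real_analytic_on2 (\<lambda>q. snd (W q)) U"

definition px :: "(real \<times> real \<Rightarrow> real) \<Rightarrow> real \<times> real \<Rightarrow> real" where
  "px f p = deriv (\<lambda>t. f (t, snd p)) (fst p)"

definition py :: "(real \<times> real \<Rightarrow> real) \<Rightarrow> real \<times> real \<Rightarrow> real" where
  "py f p = deriv (\<lambda>t. f (fst p, t)) (snd p)"

definition grad :: "(real \<times> real \<Rightarrow> real) \<Rightarrow> real \<times> real \<Rightarrow> real \<times> real" where
  "grad f p = (px f p, py f p)"

definition dirderiv :: "(real \<times> real \<Rightarrow> real) \<Rightarrow> real \<times> real \<Rightarrow> real \<times> real \<Rightarrow> real" where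
  "dirderiv f \<nu> p = inner (grad f p) \<nu>"

definition hessian_zero_at :: "(real \<times> real \<Rightarrow> real) \<Rightarrow> real \<times> real \<Rightarrow> bool" where
  "hessian_zero_at f p \<longleftrightarrow>
     px (px f) p = 0 \<and> py (px f) p = 0 \<and> px (py f) p = 0 \<and> py (py f) p = 0"

definition affine_linear_on :: "(real \<times> real \<Rightarrow> real) \<Rightarrow> (real \<times> real) set \<Rightarrow> bool" where
  "affine_linear_on f U \<longleftrightarrow> (\<exists>a b c. \<forall>p\<in>U. f p = a + b * fst p + c * snd p)"

end

theory Submission
  imports Defs
begin

text \<open>
  The Hessian of \<open>h\<close> vanishes along the segment, so the partial derivatives of \<open>h\<close> are constant
  there; since the gradient vanishes at 0, it vanishes on the segment. If the transverse derivative
  \<open>h\<^sub>\<nu>\<close> vanished near 0, then \<open>h\<close> would be constant along the lines parallel to \<open>\<nu>\<close> through the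
  segment, hence zero near 0 and, by the identity theorem, on the whole disk: \<open>h\<close> would be affine.

  In the frame \<open>(d, rot90 d)\<close> write \<open>h\<^sub>\<nu>\<close> as a double power series \<open>\<Sum> a i j * s ^ i * t ^ j\<close>. It
  vanishes on the segment, so \<open>a i 0 = 0\<close>; if \<open>m\<close> is the least exponent of \<open>t\<close> that occurs, the
  gradient of \<open>h\<^sub>\<nu>\<close> is \<open>t ^ (m - 1) * W\<close> with \<open>W\<close> analytic, and on the segment
  \<open>W = (\<Sum>i. m * a i m * s ^ i) * rot90 d\<close>. This coefficient is a nonzero power series, so off
  isolated points of the segment \<open>W\<close> does not vanish and spans the line field of the gradient,
  orthogonally to the segment.
\<close>

section \<open>Double power series\<close>

definition bps_term :: "(nat \<Rightarrow> nat \<Rightarrow> real) \<Rightarrow> real \<times> real \<Rightarrow> nat \<times> nat \<Rightarrow> real" where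
  "bps_term a q = (\<lambda>(i,j). a i j * fst q ^ i * snd q ^ j)"

definition bps :: "(nat \<Rightarrow> nat \<Rightarrow> real) \<Rightarrow> real \<times> real \<Rightarrow> real" where
  "bps a q = infsum (bps_term a q) UNIV"

definition bps_conv :: "(nat \<Rightarrow> nat \<Rightarrow> real) \<Rightarrow> real \<Rightarrow> bool" where
  "bps_conv a \<rho> \<longleftrightarrow> (\<forall>r. 0 < r \<and> r < \<rho> \<longrightarrow> (\<lambda>(i,j). \<bar>a i j\<bar> * r ^ (i+j)) summable_on UNIV)"

definition open_square :: "real \<Rightarrow> (real \<times> real) set" where
  "open_square \<rho> = {q. \<bar>fst q\<bar> < \<rho> \<and> \<bar>snd q\<bar> < \<rho>}"

definition has_bps_expansion :: "(real \<times> real \<Rightarrow> real) \<Rightarrow> (nat \<Rightarrow> nat \<Rightarrow> real) \<Rightarrow> real \<Rightarrow> bool" where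
  "has_bps_expansion f a \<rho> \<longleftrightarrow> bps_conv a \<rho> \<and> (\<forall>q\<in>open_square \<rho>. f q = bps a q)"

lemma open_square_eq: "open_square \<rho> = (\<lambda>q. \<bar>fst q\<bar>) -` {..<\<rho>} \<inter> (\<lambda>q. \<bar>snd q\<bar>) -` {..<\<rho>}"
  by (auto simp: open_square_def)

lemma open_open_square [simp]: "open (open_square \<rho>)"
  unfolding open_square_eq by (intro open_Int open_vimage continuous_intros)

lemma ball_subset_open_square: "ball 0 \<rho> \<subseteq> open_square \<rho>"
proof
  fix q :: "real \<times> real" assume "q \<in> ball 0 \<rho>"
  moreover have "\<bar>fst q\<bar> \<le> norm q" "\<bar>snd q\<bar> \<le> norm q"
    using norm_fst_le[of "fst q" "snd q"] norm_snd_le[of "snd q" "fst q"] by auto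
  ultimately show "q \<in> open_square \<rho>" by (auto simp: open_square_def)
qed

lemma norm_prod_le_abs_sum: "norm (q :: real \<times> real) \<le> \<bar>fst q\<bar> + \<bar>snd q\<bar>"
  by (cases q) (simp add: norm_Pair sqrt_sum_squares_le_sum_abs)

lemma open_square_subset_ball: "open_square \<rho> \<subseteq> ball 0 (2 * \<rho>)"
proof
  fix q :: "real \<times> real" assume "q \<in> open_square \<rho>"
  then show "q \<in> ball 0 (2 * \<rho>)"
    using norm_prod_le_abs_sum[of q] by (auto simp: open_square_def)
qed

lemma bps_conv_mono: "bps_conv a \<rho> \<Longrightarrow> \<rho>' \<le> \<rho> \<Longrightarrow> bps_conv a \<rho>'"
  by (auto simp: bps_conv_def)

lemma bps_conv_comparison:
  assumes "bps_conv a \<rho>" "0 < r" "r < \<rho>" "\<And>i j. 0 \<le> g (i,j) \<and> g (i,j) \<le> \<bar>a i j\<bar> * r^(i+j)"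
  shows "g summable_on UNIV"
proof -
  have "(\<lambda>(i,j). \<bar>a i j\<bar> * r ^ (i+j)) summable_on UNIV" using assms by (auto simp: bps_conv_def)
  then show ?thesis
    by (rule summable_on_comparison_test) (use assms(4) in auto)
qed

lemma bps_term_summable:
  assumes "bps_conv a \<rho>" "q \<in> open_square \<rho>"
  shows "bps_term a q summable_on UNIV"
proof -
  define r where "r = (max \<bar>fst q\<bar> \<bar>snd q\<bar> + \<rho>) / 2"
  have r: "0 < r" "r < \<rho>" "\<bar>fst q\<bar> \<le> r" "\<bar>snd q\<bar> \<le> r"
    using assms(2) by (auto simp: open_square_def r_def)
  have "(\<lambda>x. norm (bps_term a q x)) summable_on UNIV"
  proof (rule bps_conv_comparison[OF assms(1) r(1,2)])
    fix i j
    have "\<bar>fst q\<bar> ^ i * \<bar>snd q\<bar> ^ j \<le> r ^ i * r ^ j"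
      using r by (intro mult_mono power_mono) auto
    then show "0 \<le> norm (bps_term a q (i,j)) \<and> norm (bps_term a q (i,j)) \<le> \<bar>a i j\<bar> * r^(i+j)"
      by (simp add: bps_term_def abs_mult power_abs power_add mult.assoc mult_left_mono)
  qed
  then show ?thesis
    using summable_on_iff_abs_summable_on_real by blast
qed

lemma bps_has_sum: "bps_conv a \<rho> \<Longrightarrow> q \<in> open_square \<rho> \<Longrightarrow> (bps_term a q has_sum bps a q) UNIV"
  unfolding bps_def by (rule has_sum_infsum, rule bps_term_summable)

lemma bps_lincomb:
  assumes "bps_conv a \<rho>" "bps_conv b \<rho>" "q \<in> open_square \<rho>"
  shows "bps (\<lambda>i j. c1 * a i j + c2 * b i j) q = c1 * bps a q + c2 * bps b q"
proof -
  have "((\<lambda>x. c1 * bps_term a q x + c2 * bps_term b q x) has_sum (c1 * bps a q + c2 * bps b q)) UNIV"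
    by (intro has_sum_add has_sum_cmult_right bps_has_sum[OF assms(1,3)] bps_has_sum[OF assms(2,3)])
  moreover have "(\<lambda>x. c1 * bps_term a q x + c2 * bps_term b q x) = bps_term (\<lambda>i j. c1 * a i j + c2 * b i j) q"
    by (auto simp: bps_term_def algebra_simps)
  ultimately show ?thesis unfolding bps_def by (simp add: infsumI)
qed

lemma bps_conv_lincomb:
  assumes "bps_conv a \<rho>" "bps_conv b \<rho>"
  shows "bps_conv (\<lambda>i j. c1 * a i j + c2 * b i j) \<rho>"
  unfolding bps_conv_def
proof (intro allI impI)
  fix r assume r: "0 < r \<and> r < \<rho>"
  let ?A = "\<lambda>(i,j). \<bar>a i j\<bar> * r ^ (i+j)" and ?B = "\<lambda>(i,j). \<bar>b i j\<bar> * r ^ (i+j)"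
  have s: "(\<lambda>x. \<bar>c1\<bar> * ?A x + \<bar>c2\<bar> * ?B x) summable_on UNIV"
    using assms r unfolding bps_conv_def by (intro summable_on_add summable_on_cmult_right) auto
  show "(\<lambda>(i,j). \<bar>c1 * a i j + c2 * b i j\<bar> * r ^ (i+j)) summable_on UNIV"
  proof (rule summable_on_comparison_test[OF s])
    fix x :: "nat \<times> nat"
    obtain i j where x: "x = (i,j)" by fastforce
    have "\<bar>c1 * a i j + c2 * b i j\<bar> \<le> \<bar>c1\<bar> * \<bar>a i j\<bar> + \<bar>c2\<bar> * \<bar>b i j\<bar>"
      by (metis abs_mult abs_triangle_ineq)
    then show "(case x of (i,j) \<Rightarrow> \<bar>c1 * a i j + c2 * b i j\<bar> * r ^ (i+j)) \<le> \<bar>c1\<bar> * ?A x + \<bar>c2\<bar> * ?B x"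
      using r by (simp add: x mult_right_mono flip: mult.assoc distrib_right)
  qed (use r in auto)
qed

lemma has_bps_expansion_lincomb:
  assumes "has_bps_expansion f a \<rho>" "has_bps_expansion g b \<rho>"
  shows "has_bps_expansion (\<lambda>q. c1 * f q + c2 * g q) (\<lambda>i j. c1 * a i j + c2 * b i j) \<rho>"
  using assms bps_lincomb bps_conv_lincomb by (auto simp: has_bps_expansion_def)

lemma bps_at_0: "bps a 0 = a 0 0"
proof -
  have "(bps_term a 0 has_sum a 0 0) {(0,0)}" by (rule has_sum_finiteI) (auto simp: bps_term_def)
  moreover have "bps_term a 0 x = 0" if "x \<in> UNIV - {(0,0)}" for x
    using that by (cases x) (auto simp: bps_term_def zero_prod_def)
  ultimately have "(bps_term a 0 has_sum a 0 0) UNIV"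
    by (subst has_sum_cong_neutral[where T="{(0,0)}" and g="bps_term a 0"]) auto
  then show ?thesis unfolding bps_def by (rule infsumI)
qed

lemma bps_zero_coeffs [simp]: "bps (\<lambda>i j. 0) q = 0"
  unfolding bps_def bps_term_def by (simp add: case_prod_unfold)

section \<open>Regrouping, recentring and linear substitution\<close>

definition bps_regroup :: "('k \<Rightarrow> real) \<Rightarrow> ('k \<Rightarrow> nat) \<Rightarrow> ('k \<Rightarrow> nat) \<Rightarrow> 'k set \<Rightarrow> nat \<Rightarrow> nat \<Rightarrow> real" where
  "bps_regroup T P Q D i j = infsum T {k\<in>D. (P k, Q k) = (i,j)}"

lemma has_sum_Sigma_fibers:
  "(f has_sum x) D \<longleftrightarrow> ((\<lambda>(ij,k). f k) has_sum x) (Sigma UNIV (\<lambda>ij. {k\<in>D. (P k, Q k) = ij}))"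
  by (rule has_sum_reindex_bij_witness[where j="\<lambda>k. ((P k, Q k), k)" and i=snd]) auto

context
  fixes T :: "'k \<Rightarrow> real" and P Q :: "'k \<Rightarrow> nat" and D :: "'k set" and \<sigma> :: real
  assumes weighted_summable: "(\<lambda>k. \<bar>T k\<bar> * \<sigma>^(P k + Q k)) summable_on D" and \<sigma>_pos: "0 < \<sigma>"
begin

lemma summable_on_fiber: "T summable_on {k\<in>D. (P k, Q k) = (i,j)}"
proof -
  have "(\<lambda>k. \<bar>T k\<bar> * \<sigma>^(P k + Q k) * (1 / \<sigma>^(i+j))) summable_on {k\<in>D. (P k, Q k) = (i,j)}"
    by (intro summable_on_cmult_left summable_on_subset_banach[OF weighted_summable]) auto
  moreover have "\<bar>T k\<bar> * \<sigma>^(P k + Q k) * (1 / \<sigma>^(i+j)) = norm (T k)"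
    if "k \<in> {k\<in>D. (P k, Q k) = (i,j)}" for k
    using that \<sigma>_pos by auto
  ultimately have "(\<lambda>k. norm (T k)) summable_on {k\<in>D. (P k, Q k) = (i,j)}"
    by (rule summable_on_cong[THEN iffD1, rotated])
  then show ?thesis using summable_on_iff_abs_summable_on_real by blast
qed

lemma bps_regroup_weighted_summable:
  "(\<lambda>(i,j). \<bar>bps_regroup T P Q D i j\<bar> * \<sigma>^(i+j)) summable_on UNIV"
proof -
  define F where "F = (\<lambda>ij. {k\<in>D. (P k, Q k) = ij})"
  define N where "N = (\<lambda>k. \<bar>T k\<bar> * \<sigma>^(P k + Q k))"
  have NF: "N summable_on F ij" for ij
    using summable_on_subset_banach[OF weighted_summable[folded N_def]] by (auto simp: F_def)
  have "((\<lambda>(ij,k). N k) has_sum infsum N D) (Sigma UNIV F)"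
    using has_sum_infsum[OF weighted_summable[folded N_def]] has_sum_Sigma_fibers[where f=N and D=D and P=P and Q=Q]
    by (simp add: F_def)
  then have "((\<lambda>ij. infsum N (F ij)) has_sum infsum N D) UNIV"
    by (rule has_sum_SigmaD) (simp add: NF has_sum_infsum)
  then have fibers: "(\<lambda>ij. infsum N (F ij)) summable_on UNIV" by (rule has_sum_imp_summable)
  show ?thesis
  proof (rule summable_on_comparison_test[OF fibers])
    fix ij :: "nat \<times> nat"
    obtain i j where ij: "ij = (i,j)" by fastforce
    have "(\<lambda>k. norm (T k)) summable_on F (i,j)"
      using summable_on_fiber summable_on_iff_abs_summable_on_real by (auto simp: F_def)
    then have "\<bar>bps_regroup T P Q D i j\<bar> \<le> infsum (\<lambda>k. norm (T k)) (F (i,j))"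
      using norm_infsum_bound by (fastforce simp: bps_regroup_def F_def)
    then have "\<bar>bps_regroup T P Q D i j\<bar> * \<sigma>^(i+j) \<le> infsum (\<lambda>k. norm (T k)) (F (i,j)) * \<sigma>^(i+j)"
      using \<sigma>_pos by (intro mult_right_mono) auto
    also have "\<dots> = infsum N (F (i,j))"
      by (subst infsum_cmult_left'[symmetric], intro infsum_cong) (auto simp: N_def F_def)
    finally show "(case ij of (i,j) \<Rightarrow> \<bar>bps_regroup T P Q D i j\<bar> * \<sigma>^(i+j)) \<le> infsum N (F ij)"
      by (simp add: ij)
  qed (use \<sigma>_pos in auto)
qed

lemma has_sum_bps_regroup:
  assumes "\<bar>s\<bar> \<le> \<sigma>" "\<bar>t\<bar> \<le> \<sigma>"
  shows "((\<lambda>k. T k * s^P k * t^Q k) has_sum bps (bps_regroup T P Q D) (s,t)) D"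
proof -
  define E where "E = (\<lambda>k. T k * s^P k * t^Q k)"
  have "(\<lambda>k. norm (E k)) summable_on D"
  proof (rule summable_on_comparison_test[OF weighted_summable])
    fix k
    have "\<bar>s\<bar>^P k * \<bar>t\<bar>^Q k \<le> \<sigma>^P k * \<sigma>^Q k"
      using assms by (intro mult_mono power_mono) auto
    then show "norm (E k) \<le> \<bar>T k\<bar> * \<sigma>^(P k + Q k)"
      by (simp add: E_def abs_mult power_abs power_add mult.assoc mult_left_mono)
  qed auto
  then have E: "E summable_on D" using summable_on_iff_abs_summable_on_real by blast
  have sigma: "((\<lambda>(ij,k). E k) has_sum infsum E D) (Sigma UNIV (\<lambda>ij. {k\<in>D. (P k, Q k) = ij}))"
    using has_sum_infsum[OF E] has_sum_Sigma_fibers[where f=E and D=D and P=P and Q=Q] by simp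
  have fiber: "(E has_sum bps_term (bps_regroup T P Q D) (s,t) (i,j)) {k\<in>D. (P k, Q k) = (i,j)}" for i j
  proof -
    have "((\<lambda>k. T k * (s^i * t^j)) has_sum (bps_regroup T P Q D i j * (s^i * t^j))) {k\<in>D. (P k, Q k) = (i,j)}"
      unfolding bps_regroup_def by (intro has_sum_cmult_left has_sum_infsum summable_on_fiber)
    then have "(E has_sum (bps_regroup T P Q D i j * (s^i * t^j))) {k\<in>D. (P k, Q k) = (i,j)}"
      by (rule has_sum_cong[THEN iffD1, rotated]) (auto simp: E_def mult.assoc)
    then show ?thesis by (simp add: bps_term_def mult.assoc)
  qed
  have "(bps_term (bps_regroup T P Q D) (s,t) has_sum infsum E D) UNIV"
    by (rule has_sum_SigmaD[OF sigma]) (use fiber in force)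
  then have "bps (bps_regroup T P Q D) (s,t) = infsum E D" unfolding bps_def by (rule infsumI)
  then show ?thesis using has_sum_infsum[OF E] by (simp add: E_def)
qed

end

text \<open>A substitution into a double power series that expands every monomial into a finite block
  of monomials yields a new double power series, obtained by regrouping all blocks.\<close>
lemma bps_regroup_blocks:
  fixes T :: "(nat \<times> nat) \<times> 'k \<Rightarrow> real" and P Q :: "(nat \<times> nat) \<times> 'k \<Rightarrow> nat"
    and B :: "nat \<times> nat \<Rightarrow> 'k set" and F :: "real \<times> real \<Rightarrow> real \<times> real"
  defines "b \<equiv> bps_regroup T P Q (Sigma UNIV B)"
  assumes a: "bps_conv a \<rho>" and fin: "\<And>ij. finite (B ij)"
    and g: "\<And>r. 0 < r \<Longrightarrow> r < \<sigma> \<Longrightarrow> 0 < g r \<and> g r < \<rho>"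
    and bound: "\<And>r i j. 0 < r \<Longrightarrow> r < \<sigma> \<Longrightarrow>
      (\<Sum>k\<in>B (i,j). \<bar>T ((i,j),k)\<bar> * r^(P ((i,j),k) + Q ((i,j),k))) \<le> \<bar>a i j\<bar> * g r ^ (i+j)"
    and block: "\<And>s t ij. (s,t) \<in> open_square \<sigma> \<Longrightarrow>
      (\<Sum>k\<in>B ij. T (ij,k) * s^P (ij,k) * t^Q (ij,k)) = bps_term a (F (s,t)) ij"
  shows "bps_conv b \<sigma>" and "q \<in> open_square \<sigma> \<Longrightarrow> bps a (F q) = bps b q"
proof -
  have weighted: "(\<lambda>k. \<bar>T k\<bar> * r^(P k + Q k)) summable_on Sigma UNIV B" if r: "0 < r" "r < \<sigma>" for r
  proof (rule summable_on_SigmaI)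
    show "(\<lambda>ij. \<Sum>k\<in>B ij. \<bar>T (ij,k)\<bar> * r^(P (ij,k) + Q (ij,k))) summable_on UNIV"
      using g[OF r] bound[OF r] r
      by (intro bps_conv_comparison[OF a, of "g r"]) (auto intro!: sum_nonneg)
  qed (use r in \<open>auto intro: has_sum_finiteI fin\<close>)
  then show "bps_conv b \<sigma>"
    unfolding bps_conv_def b_def using bps_regroup_weighted_summable by blast
  assume q: "q \<in> open_square \<sigma>"
  obtain s t where st: "q = (s,t)" by fastforce
  define r where "r = (max \<bar>s\<bar> \<bar>t\<bar> + \<sigma>) / 2"
  have r: "0 < r" "r < \<sigma>" "\<bar>s\<bar> \<le> r" "\<bar>t\<bar> \<le> r"
    using q by (auto simp: open_square_def r_def st)
  have sigma: "((\<lambda>k. T k * s^P k * t^Q k) has_sum bps b (s,t)) (Sigma UNIV B)"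
    unfolding b_def by (rule has_sum_bps_regroup[OF weighted[OF r(1,2)] r(1,3,4)])
  have blocks: "((\<lambda>k. T (ij,k) * s^P (ij,k) * t^Q (ij,k)) has_sum bps_term a (F (s,t)) ij) (B ij)" for ij
    by (intro has_sum_finiteI fin) (use block[OF q[unfolded st], of ij] in simp)
  have "(bps_term a (F (s,t)) has_sum bps b (s,t)) UNIV"
    by (rule has_sum_SigmaD[OF sigma]) (simp add: blocks)
  then show "bps a (F q) = bps b q" unfolding bps_def st by (simp add: infsumI)
qed

lemma sum_product_binomial:
  fixes A B X Y :: "'a::comm_ring_1"
  shows "(\<Sum>(p,q)\<in>{..i}\<times>{..j}. (of_nat (i choose p) * A^p * X^(i-p)) * (of_nat (j choose q) * B^q * Y^(j-q)))
         = (A+X)^i * (B+Y)^j"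
  by (simp add: binomial_ring sum_product sum.cartesian_product)

definition bps_shift :: "(nat \<Rightarrow> nat \<Rightarrow> real) \<Rightarrow> real \<times> real \<Rightarrow> nat \<Rightarrow> nat \<Rightarrow> real" where
  "bps_shift a q0 = bps_regroup
     (\<lambda>((i,j),(p,q)). a i j * (of_nat (i choose p) * fst q0^(i-p)) * (of_nat (j choose q) * snd q0^(j-q)))
     (\<lambda>k. fst (snd k)) (\<lambda>k. snd (snd k)) (Sigma UNIV (\<lambda>(i,j). {..i}\<times>{..j}))"

lemma
  assumes a: "bps_conv a \<rho>" and q0: "q0 \<in> open_square \<rho>"
  defines "\<sigma> \<equiv> \<rho> - max \<bar>fst q0\<bar> \<bar>snd q0\<bar>"
  shows bps_conv_shift: "bps_conv (bps_shift a q0) \<sigma>"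
    and bps_shift: "v \<in> open_square \<sigma> \<Longrightarrow> bps a (q0 + v) = bps (bps_shift a q0) v"
proof -
  obtain x0 y0 where xy: "q0 = (x0,y0)" by fastforce
  define B :: "nat \<times> nat \<Rightarrow> (nat \<times> nat) set" where "B = (\<lambda>(i,j). {..i}\<times>{..j})"
  define T where "T = (\<lambda>((i,j),(p,q)). a i j * (of_nat (i choose p) * x0^(i-p)) * (of_nat (j choose q) * y0^(j-q)))"
  define P :: "(nat \<times> nat) \<times> nat \<times> nat \<Rightarrow> nat" where "P = (\<lambda>k. fst (snd k))"
  define Q :: "(nat \<times> nat) \<times> nat \<times> nat \<Rightarrow> nat" where "Q = (\<lambda>k. snd (snd k))"
  have fin: "finite (B ij)" for ij by (simp add: B_def split: prod.split)
  have bound: "(\<Sum>k\<in>B (i,j). \<bar>T ((i,j),k)\<bar> * r^(P ((i,j),k) + Q ((i,j),k)))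
      \<le> \<bar>a i j\<bar> * (r + max \<bar>x0\<bar> \<bar>y0\<bar>)^(i+j)" if r: "0 < r" for r i j
  proof -
    have "(\<Sum>k\<in>B (i,j). \<bar>T ((i,j),k)\<bar> * r^(P ((i,j),k) + Q ((i,j),k)))
        = \<bar>a i j\<bar> * (\<Sum>(p,q)\<in>{..i}\<times>{..j}. (of_nat (i choose p) * r^p * \<bar>x0\<bar>^(i-p)) * (of_nat (j choose q) * r^q * \<bar>y0\<bar>^(j-q)))"
      unfolding sum_distrib_left B_def
      by (intro sum.cong refl) (auto simp: T_def P_def Q_def abs_mult power_abs power_add mult_ac split: prod.split)
    also have "\<dots> = \<bar>a i j\<bar> * ((r + \<bar>x0\<bar>)^i * (r + \<bar>y0\<bar>)^j)" by (simp add: sum_product_binomial)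
    also have "\<dots> \<le> \<bar>a i j\<bar> * ((r + max \<bar>x0\<bar> \<bar>y0\<bar>)^i * (r + max \<bar>x0\<bar> \<bar>y0\<bar>)^j)"
      using r by (intro mult_left_mono mult_mono power_mono) auto
    finally show ?thesis by (simp add: power_add)
  qed
  have block: "(\<Sum>k\<in>B ij. T (ij,k) * s^P (ij,k) * t^Q (ij,k)) = bps_term a ((x0,y0) + (s,t)) ij"
    if "(s,t) \<in> open_square \<sigma>" for s t ij
  proof -
    obtain i j where ij: "ij = (i,j)" by fastforce
    have "(\<Sum>k\<in>B (i,j). T ((i,j),k) * s^P ((i,j),k) * t^Q ((i,j),k))
        = a i j * (\<Sum>(p,q)\<in>{..i}\<times>{..j}. (of_nat (i choose p) * s^p * x0^(i-p)) * (of_nat (j choose q) * t^q * y0^(j-q)))"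
      unfolding sum_distrib_left B_def by (intro sum.cong refl) (auto simp: T_def P_def Q_def mult_ac split: prod.split)
    then show ?thesis by (simp add: ij sum_product_binomial bps_term_def add.commute)
  qed
  have b: "bps_shift a (x0,y0) = bps_regroup T P Q (Sigma UNIV B)"
    by (simp add: bps_shift_def T_def B_def P_def Q_def)
  have g: "0 < r + max \<bar>x0\<bar> \<bar>y0\<bar> \<and> r + max \<bar>x0\<bar> \<bar>y0\<bar> < \<rho>" if "0 < r" "r < \<sigma>" for r
    using that by (auto simp: \<sigma>_def xy)
  note regroup = bps_regroup_blocks[where F="\<lambda>v. (x0,y0) + v" and \<sigma>=\<sigma>, OF a fin g bound block]
  show "bps_conv (bps_shift a q0) \<sigma>" "v \<in> open_square \<sigma> \<Longrightarrow> bps a (q0 + v) = bps (bps_shift a q0) v"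
    using regroup by (simp_all add: b xy)
qed

lemma abs_lincomb_le: "\<bar>\<alpha> * x + \<beta> * y\<bar> \<le> (\<bar>\<alpha>\<bar> + \<bar>\<beta>\<bar>) * max \<bar>x\<bar> \<bar>y\<bar>"
  for \<alpha> x \<beta> y :: real
proof -
  have "\<bar>\<alpha> * x + \<beta> * y\<bar> \<le> \<bar>\<alpha>\<bar> * \<bar>x\<bar> + \<bar>\<beta>\<bar> * \<bar>y\<bar>"
    using abs_triangle_ineq[of "\<alpha> * x" "\<beta> * y"] by (simp add: abs_mult)
  also have "\<dots> \<le> \<bar>\<alpha>\<bar> * max \<bar>x\<bar> \<bar>y\<bar> + \<bar>\<beta>\<bar> * max \<bar>x\<bar> \<bar>y\<bar>"
    by (intro add_mono mult_left_mono) auto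
  finally show ?thesis by (simp add: distrib_right)
qed

lemma linear_map_open_square:
  assumes "0 < \<kappa>" "\<bar>\<alpha>\<bar> + \<bar>\<beta>\<bar> \<le> \<kappa>" "\<bar>\<gamma>\<bar> + \<bar>\<delta>\<bar> \<le> \<kappa>" "q \<in> open_square (\<rho> / \<kappa>)"
  shows "(\<alpha> * fst q + \<beta> * snd q, \<gamma> * fst q + \<delta> * snd q) \<in> open_square \<rho>"
proof -
  define m where "m = max \<bar>fst q\<bar> \<bar>snd q\<bar>"
  have m: "0 \<le> m" "m < \<rho> / \<kappa>" using assms(4) by (auto simp: m_def open_square_def)
  have "\<kappa> * m < \<rho>"
    using mult_strict_left_mono[OF m(2) assms(1)] assms(1) by simp
  moreover have "(\<bar>\<alpha>\<bar> + \<bar>\<beta>\<bar>) * m \<le> \<kappa> * m" "(\<bar>\<gamma>\<bar> + \<bar>\<delta>\<bar>) * m \<le> \<kappa> * m"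
    using assms m by (simp_all add: mult_right_mono)
  ultimately have "\<bar>\<alpha> * fst q + \<beta> * snd q\<bar> < \<rho>" "\<bar>\<gamma> * fst q + \<delta> * snd q\<bar> < \<rho>"
    using abs_lincomb_le[of \<alpha> "fst q" \<beta> "snd q"] abs_lincomb_le[of \<gamma> "fst q" \<delta> "snd q"]
    unfolding m_def by linarith+
  then show ?thesis by (simp add: open_square_def)
qed

lemma has_bps_expansion_linear_subst:
  assumes f: "has_bps_expansion f a \<rho>" and \<kappa>: "0 < \<kappa>" "\<bar>\<alpha>\<bar> + \<bar>\<beta>\<bar> \<le> \<kappa>" "\<bar>\<gamma>\<bar> + \<bar>\<delta>\<bar> \<le> \<kappa>"
  obtains b where "has_bps_expansion (\<lambda>q. f (\<alpha> * fst q + \<beta> * snd q, \<gamma> * fst q + \<delta> * snd q)) b (\<rho> / \<kappa>)"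
proof -
  define L where "L = (\<lambda>q::real \<times> real. (\<alpha> * fst q + \<beta> * snd q, \<gamma> * fst q + \<delta> * snd q))"
  define B :: "nat \<times> nat \<Rightarrow> (nat \<times> nat) set" where "B = (\<lambda>(i,j). {..i}\<times>{..j})"
  define T where "T = (\<lambda>((i,j),(p,q)). a i j * (of_nat (i choose p) * \<alpha>^p * \<beta>^(i-p)) * (of_nat (j choose q) * \<gamma>^q * \<delta>^(j-q)))"
  define P :: "(nat \<times> nat) \<times> nat \<times> nat \<Rightarrow> nat" where "P = (\<lambda>((i,j),(p,q)). p + q)"
  define Q :: "(nat \<times> nat) \<times> nat \<times> nat \<Rightarrow> nat" where "Q = (\<lambda>((i,j),(p,q)). (i - p) + (j - q))"
  have a: "bps_conv a \<rho>" using f by (simp add: has_bps_expansion_def)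
  have fin: "finite (B ij)" for ij by (simp add: B_def split: prod.split)
  have g: "0 < \<kappa> * r \<and> \<kappa> * r < \<rho>" if "0 < r" "r < \<rho> / \<kappa>" for r
    using that \<kappa> by (simp add: pos_less_divide_eq mult.commute)
  have bound: "(\<Sum>k\<in>B (i,j). \<bar>T ((i,j),k)\<bar> * r^(P ((i,j),k) + Q ((i,j),k))) \<le> \<bar>a i j\<bar> * (\<kappa> * r)^(i+j)"
    if r: "0 < r" for r i j
  proof -
    have "\<bar>T ((i,j),(p,q))\<bar> * r^(P ((i,j),(p,q)) + Q ((i,j),(p,q)))
        = \<bar>a i j\<bar> * ((of_nat (i choose p) * (\<bar>\<alpha>\<bar> * r)^p * (\<bar>\<beta>\<bar> * r)^(i-p)) * (of_nat (j choose q) * (\<bar>\<gamma>\<bar> * r)^q * (\<bar>\<delta>\<bar> * r)^(j-q)))"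
      for p q by (simp add: T_def P_def Q_def abs_mult power_abs power_add power_mult_distrib mult_ac)
    then have "(\<Sum>k\<in>B (i,j). \<bar>T ((i,j),k)\<bar> * r^(P ((i,j),k) + Q ((i,j),k)))
        = \<bar>a i j\<bar> * ((\<bar>\<alpha>\<bar> * r + \<bar>\<beta>\<bar> * r)^i * (\<bar>\<gamma>\<bar> * r + \<bar>\<delta>\<bar> * r)^j)"
      unfolding sum_distrib_left B_def sum_product_binomial[symmetric] by (intro sum.cong refl) auto
    also have "\<dots> \<le> \<bar>a i j\<bar> * ((\<kappa> * r)^i * (\<kappa> * r)^j)"
    proof (intro mult_left_mono mult_mono power_mono)
      show "\<bar>\<alpha>\<bar> * r + \<bar>\<beta>\<bar> * r \<le> \<kappa> * r" "\<bar>\<gamma>\<bar> * r + \<bar>\<delta>\<bar> * r \<le> \<kappa> * r"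
        using r \<kappa> by (simp_all add: mult_right_mono flip: distrib_right)
    qed (use r \<kappa> in auto)
    finally show ?thesis by (simp add: power_add)
  qed
  have block: "(\<Sum>k\<in>B ij. T (ij,k) * s^P (ij,k) * t^Q (ij,k)) = bps_term a (L (s,t)) ij" for s t ij
  proof -
    obtain i j where ij: "ij = (i,j)" by fastforce
    have "T ((i,j),(p,q)) * s^P ((i,j),(p,q)) * t^Q ((i,j),(p,q))
        = a i j * ((of_nat (i choose p) * (\<alpha> * s)^p * (\<beta> * t)^(i-p)) * (of_nat (j choose q) * (\<gamma> * s)^q * (\<delta> * t)^(j-q)))"
      for p q by (simp add: T_def P_def Q_def power_add power_mult_distrib mult_ac)
    then have "(\<Sum>k\<in>B (i,j). T ((i,j),k) * s^P ((i,j),k) * t^Q ((i,j),k))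
        = a i j * ((\<alpha> * s + \<beta> * t)^i * (\<gamma> * s + \<delta> * t)^j)"
      unfolding sum_distrib_left B_def sum_product_binomial[symmetric] by (intro sum.cong refl) auto
    then show ?thesis by (simp add: ij L_def bps_term_def)
  qed
  note regroup = bps_regroup_blocks[where F=L and \<sigma>="\<rho> / \<kappa>", OF a fin g bound block]
  have "has_bps_expansion (\<lambda>q. f (L q)) (bps_regroup T P Q (Sigma UNIV B)) (\<rho> / \<kappa>)"
    using f regroup linear_map_open_square[OF \<kappa>] by (auto simp: has_bps_expansion_def L_def)
  then show ?thesis using that by (simp add: L_def)
qed

definition bps_swap :: "(nat \<Rightarrow> nat \<Rightarrow> real) \<Rightarrow> nat \<Rightarrow> nat \<Rightarrow> real" where
  "bps_swap a i j = a j i"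

lemma bps_swap: "bps (bps_swap a) q = bps a (prod.swap q)"
  unfolding bps_def
  by (rule infsum_reindex_bij_witness[where i=prod.swap and j=prod.swap])
     (auto simp: bps_term_def bps_swap_def mult_ac)

lemma bps_conv_swap: "bps_conv (bps_swap a) \<rho> \<longleftrightarrow> bps_conv a \<rho>"
proof -
  have "(\<lambda>(i,j). \<bar>bps_swap a i j\<bar> * r^(i+j)) summable_on UNIV \<longleftrightarrow> (\<lambda>(i,j). \<bar>a i j\<bar> * r^(i+j)) summable_on UNIV"
    for r :: real
    by (rule summable_on_reindex_bij_witness[where i=prod.swap and j=prod.swap])
       (auto simp: bps_swap_def add.commute)
  then show ?thesis by (simp add: bps_conv_def)
qed

lemma bps_conv_drop_fst:
  assumes a: "bps_conv a \<rho>"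
  shows "bps_conv (\<lambda>i j. a (i+k) j) \<rho>"
  unfolding bps_conv_def
proof (intro allI impI)
  let ?s = "\<lambda>(i,j). (i+k, j)"
  fix r assume r: "0 < r \<and> r < \<rho>"
  have "(\<lambda>(i,j). \<bar>a i j\<bar> * r ^ (i+j)) summable_on UNIV"
    using a r by (auto simp: bps_conv_def)
  then have "(\<lambda>(i,j). \<bar>a i j\<bar> * r ^ (i+j)) summable_on range ?s"
    by (rule summable_on_subset_banach) simp
  then have "((\<lambda>(i,j). \<bar>a i j\<bar> * r ^ (i+j)) \<circ> ?s) summable_on UNIV"
    by (subst summable_on_reindex[symmetric]) (auto simp: inj_on_def)
  then have "(\<lambda>x. (1 / r^k) * ((\<lambda>(i,j). \<bar>a i j\<bar> * r ^ (i+j)) \<circ> ?s) x) summable_on UNIV"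
    by (rule summable_on_cmult_right)
  moreover have "(\<lambda>x. (1 / r^k) * ((\<lambda>(i,j). \<bar>a i j\<bar> * r ^ (i+j)) \<circ> ?s) x) = (\<lambda>(i,j). \<bar>a (i+k) j\<bar> * r ^ (i+j))"
    using r by (simp add: fun_eq_iff power_add)
  ultimately show "(\<lambda>(i,j). \<bar>a (i+k) j\<bar> * r ^ (i+j)) summable_on UNIV"
    by simp
qed

lemma bps_factor_fst:
  assumes a: "bps_conv a \<rho>" and zero: "\<And>i j. i < k \<Longrightarrow> a i j = 0" and q: "q \<in> open_square \<rho>"
  shows "bps a q = fst q ^ k * bps (\<lambda>i j. a (i+k) j) q"
proof -
  let ?s = "\<lambda>(i,j). (i+k, j)"
  have inj: "inj ?s" by (auto simp: inj_on_def)
  have "((\<lambda>x. fst q ^ k * bps_term (\<lambda>i j. a (i+k) j) q x) has_sum (fst q ^ k * bps (\<lambda>i j. a (i+k) j) q)) UNIV"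
    by (intro has_sum_cmult_right bps_has_sum[OF bps_conv_drop_fst[OF a] q])
  moreover have "(\<lambda>x. fst q ^ k * bps_term (\<lambda>i j. a (i+k) j) q x) = bps_term a q \<circ> ?s"
    by (simp add: fun_eq_iff bps_term_def power_add)
  ultimately have "((bps_term a q \<circ> ?s) has_sum (fst q ^ k * bps (\<lambda>i j. a (i+k) j) q)) UNIV"
    by simp
  then have "(bps_term a q has_sum (fst q ^ k * bps (\<lambda>i j. a (i+k) j) q)) (range ?s)"
    by (simp add: has_sum_reindex[OF inj])
  moreover have outside: "bps_term a q x = 0" if "x \<in> UNIV - range ?s" for x
  proof -
    obtain i j where x: "x = (i,j)" by fastforce
    have "i < k"
    proof (rule ccontr)
      assume "\<not> i < k"
      then have "x = ?s (i - k, j)" by (simp add: x)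
      then show False using that by auto
    qed
    then show ?thesis by (simp add: x bps_term_def zero)
  qed
  moreover have "(bps_term a q has_sum s) UNIV \<longleftrightarrow> (bps_term a q has_sum s) (range ?s)" for s
    by (rule has_sum_cong_neutral) (use outside in auto)
  ultimately have "(bps_term a q has_sum (fst q ^ k * bps (\<lambda>i j. a (i+k) j) q)) UNIV"
    by simp
  then show ?thesis unfolding bps_def by (rule infsumI)
qed

lemma bps_conv_drop_snd:
  assumes "bps_conv a \<rho>"
  shows "bps_conv (\<lambda>i j. a i (j+k)) \<rho>"
proof -
  have "(\<lambda>i j. a i (j+k)) = bps_swap (\<lambda>i j. bps_swap a (i+k) j)"
    by (simp add: bps_swap_def fun_eq_iff)
  then show ?thesis
    using bps_conv_drop_fst[of "bps_swap a"] assms by (simp add: bps_conv_swap)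
qed

lemma bps_factor_snd:
  assumes a: "bps_conv a \<rho>" and zero: "\<And>i j. j < k \<Longrightarrow> a i j = 0" and q: "q \<in> open_square \<rho>"
  shows "bps a q = snd q ^ k * bps (\<lambda>i j. a i (j+k)) q"
proof -
  have swapped: "bps_conv (bps_swap a) \<rho>" "\<And>i j. i < k \<Longrightarrow> bps_swap a i j = 0" "prod.swap q \<in> open_square \<rho>"
    using a zero q by (auto simp: bps_conv_swap bps_swap_def open_square_def)
  have "(\<lambda>i j. a i (j+k)) = bps_swap (\<lambda>i j. bps_swap a (i+k) j)"
    by (simp add: bps_swap_def fun_eq_iff)
  then show ?thesis
    using bps_factor_fst[where k=k, OF swapped] by (simp add: bps_swap)
qed

section \<open>Differentiation\<close>

definition bps_dx :: "(nat \<Rightarrow> nat \<Rightarrow> real) \<Rightarrow> nat \<Rightarrow> nat \<Rightarrow> real" where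
  "bps_dx a i j = of_nat (i+1) * a (i+1) j"

definition bps_dy :: "(nat \<Rightarrow> nat \<Rightarrow> real) \<Rightarrow> nat \<Rightarrow> nat \<Rightarrow> real" where
  "bps_dy a i j = of_nat (j+1) * a i (j+1)"

lemma bps_dy_eq_swap_dx: "bps_dy a = bps_swap (bps_dx (bps_swap a))"
  by (simp add: bps_dy_def bps_dx_def bps_swap_def fun_eq_iff)

lemma bounded_Suc_times_power:
  fixes x :: real assumes "0 \<le> x" "x < 1"
  obtains B where "\<And>n. of_nat (n+1) * x^n \<le> B"
proof -
  have "(\<lambda>n. of_nat n * x ^ n) \<longlonglongrightarrow> 0"
    using assms by (intro powser_times_n_limit_0) auto
  then obtain K where K: "\<And>n. norm (of_nat n * x ^ n) \<le> K"
    using BseqE[OF convergent_imp_Bseq[OF convergentI]] by metis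
  have "of_nat (n+1) * x^n \<le> K + 1" for n
    using K[of n] abs_ge_self[of "of_nat n * x ^ n"] power_le_one[OF assms(1) less_imp_le[OF assms(2)], of n]
    by (simp add: distrib_right)
  then show ?thesis using that by blast
qed

lemma bps_conv_dx:
  assumes a: "bps_conv a \<rho>"
  shows "bps_conv (bps_dx a) \<rho>"
  unfolding bps_conv_def
proof (intro allI impI)
  fix r assume r: "0 < r \<and> r < \<rho>"
  define r' where "r' = (r + \<rho>) / 2"
  have r': "0 < r'" "r < r'" "r' < \<rho>" using r by (auto simp: r'_def)
  obtain B where B: "\<And>n. of_nat (n+1) * (r/r')^n \<le> B"
    using bounded_Suc_times_power[of "r/r'"] r r' by auto
  have B0: "0 \<le> B" using B[of 0] by simp
  let ?s = "\<lambda>(i,j). (i+1, j)"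
  have "(\<lambda>(i,j). \<bar>a i j\<bar> * r' ^ (i+j)) summable_on UNIV"
    using a r' by (auto simp: bps_conv_def)
  then have "(\<lambda>(i,j). \<bar>a i j\<bar> * r' ^ (i+j)) summable_on range ?s"
    by (rule summable_on_subset_banach) simp
  then have "((\<lambda>(i,j). \<bar>a i j\<bar> * r' ^ (i+j)) \<circ> ?s) summable_on UNIV"
    by (subst summable_on_reindex[symmetric]) (auto simp: inj_on_def)
  then have dom: "(\<lambda>x. (B / r') * ((\<lambda>(i,j). \<bar>a i j\<bar> * r' ^ (i+j)) \<circ> ?s) x) summable_on UNIV"
    by (rule summable_on_cmult_right)
  show "(\<lambda>(i,j). \<bar>bps_dx a i j\<bar> * r ^ (i+j)) summable_on UNIV"
  proof (rule summable_on_comparison_test[OF dom])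
    fix x :: "nat \<times> nat"
    obtain i j where x: "x = (i,j)" by fastforce
    have "of_nat (i+1) * r^i = of_nat (i+1) * (r/r')^i * r'^i"
      using r' by (simp add: power_divide)
    also have "\<dots> \<le> B * r'^i" using B[of i] r' by (intro mult_right_mono) auto
    finally have "of_nat (i+1) * r^i \<le> B * r'^i" .
    moreover have "r^j \<le> r'^j" using r r' by (intro power_mono) auto
    ultimately have "of_nat (i+1) * r^i * r^j \<le> B * r'^i * r'^j"
      by (rule mult_mono) (use r r' B0 in auto)
    then have "\<bar>a (i+1) j\<bar> * (of_nat (i+1) * r^i * r^j) \<le> \<bar>a (i+1) j\<bar> * (B * r'^i * r'^j)"
      by (rule mult_left_mono) simp
    moreover have "(case x of (i,j) \<Rightarrow> \<bar>bps_dx a i j\<bar> * r ^ (i+j)) = \<bar>a (i+1) j\<bar> * (of_nat (i+1) * r^i * r^j)"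
      by (simp add: x bps_dx_def abs_mult power_add mult_ac)
    moreover have "(B / r') * ((\<lambda>(i,j). \<bar>a i j\<bar> * r' ^ (i+j)) \<circ> ?s) x = \<bar>a (i+1) j\<bar> * (B * r'^i * r'^j)"
      using r' by (simp add: x power_add field_simps)
    ultimately show "(case x of (i,j) \<Rightarrow> \<bar>bps_dx a i j\<bar> * r ^ (i+j))
        \<le> (B / r') * ((\<lambda>(i,j). \<bar>a i j\<bar> * r' ^ (i+j)) \<circ> ?s) x"
      by simp
  qed (use r in auto)
qed

lemma bps_conv_dy: "bps_conv a \<rho> \<Longrightarrow> bps_conv (bps_dy a) \<rho>"
  by (simp add: bps_dy_eq_swap_dx bps_conv_swap bps_conv_dx)

lemma bps_shift_coeff_10: "bps_shift a q0 1 0 = bps (bps_dx a) q0"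
  unfolding bps_shift_def bps_regroup_def bps_def
  by (rule infsum_reindex_bij_witness[where j="\<lambda>((i,j),_). (i - 1, j)" and i="\<lambda>(i,j). ((i+1,j),(1,0))"])
     (auto simp: bps_dx_def bps_term_def)

lemma bps_shift_coeff_01: "bps_shift a q0 0 1 = bps (bps_dy a) q0"
  unfolding bps_shift_def bps_regroup_def bps_def
  by (rule infsum_reindex_bij_witness[where j="\<lambda>((i,j),_). (i, j - 1)" and i="\<lambda>(i,j). ((i,j+1),(0,1))"])
     (auto simp: bps_dy_def bps_term_def)

lemma power_le_square_ratio:
  fixes m r :: real assumes "0 \<le> m" "m \<le> r" "0 < r" "2 \<le> n"
  shows "m^n \<le> (m/r)^2 * r^n"
proof -
  obtain k where k: "n = 2 + k" using le_Suc_ex[OF assms(4)] by blast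
  have "m^n = m^2 * m^k" by (simp add: k power_add power2_eq_square)
  also have "\<dots> \<le> m^2 * r^k" using assms by (intro mult_left_mono power_mono) auto
  also have "\<dots> = (m/r)^2 * r^n" using assms by (simp add: k power_divide power_add power2_eq_square)
  finally show ?thesis .
qed

text \<open>Every monomial beyond the affine part has degree at least two.\<close>
lemma bps_remainder_bound:
  assumes b: "bps_conv b \<sigma>" and r: "0 < r" "r < \<sigma>" and m: "max \<bar>u\<bar> \<bar>w\<bar> \<le> r"
  shows "\<bar>bps b (u,w) - (b 0 0 + b 1 0 * u + b 0 1 * w)\<bar>
           \<le> (max \<bar>u\<bar> \<bar>w\<bar> / r)^2 * infsum (\<lambda>(i,j). \<bar>b i j\<bar> * r^(i+j)) UNIV"
proof -
  define m where "m = max \<bar>u\<bar> \<bar>w\<bar>"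
  define G where "G = (\<lambda>(i,j). \<bar>b i j\<bar> * r^(i+j))"
  define F :: "(nat \<times> nat) set" where "F = {(0,0),(1,0),(0,1)}"
  have G: "G summable_on UNIV" using b r by (auto simp: bps_conv_def G_def)
  have G0: "0 \<le> G x" for x using r by (auto simp: G_def split: prod.splits)
  have "(u,w) \<in> open_square \<sigma>" using m r by (auto simp: open_square_def)
  then have "(bps_term b (u,w) has_sum bps b (u,w)) UNIV" by (rule bps_has_sum[OF b])
  moreover have "(bps_term b (u,w) has_sum (b 0 0 + b 1 0 * u + b 0 1 * w)) F"
    by (rule has_sum_finiteI) (auto simp: F_def bps_term_def)
  ultimately have tail: "(bps_term b (u,w) has_sum (bps b (u,w) - (b 0 0 + b 1 0 * u + b 0 1 * w))) (UNIV - F)"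
    by (rule has_sum_Diff) simp
  have bound: "norm (bps_term b (u,w) x) \<le> (m/r)^2 * G x" if "x \<in> UNIV - F" for x
  proof -
    obtain i j where x: "x = (i,j)" by fastforce
    have "2 \<le> i + j" using that by (auto simp: x F_def)
    have "\<bar>u\<bar>^i * \<bar>w\<bar>^j \<le> m^i * m^j"
      by (intro mult_mono power_mono) (auto simp: m_def)
    also have "\<dots> \<le> (m/r)^2 * r^(i+j)"
      unfolding power_add[symmetric] using m r \<open>2 \<le> i + j\<close> by (intro power_le_square_ratio) (auto simp: m_def)
    finally show ?thesis
      by (simp add: x bps_term_def G_def abs_mult power_abs mult_ac mult_left_mono)
  qed
  have GF: "G summable_on (UNIV - F)" by (rule summable_on_subset_banach[OF G]) auto
  have norms: "(\<lambda>x. norm (bps_term b (u,w) x)) summable_on (UNIV - F)"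
    by (rule summable_on_comparison_test[OF summable_on_cmult_right[OF GF]]) (use bound in auto)
  then have "\<bar>bps b (u,w) - (b 0 0 + b 1 0 * u + b 0 1 * w)\<bar> \<le> infsum (\<lambda>x. norm (bps_term b (u,w) x)) (UNIV - F)"
    using norm_has_sum_bound[OF has_sum_infsum tail] by simp
  also have "\<dots> \<le> infsum (\<lambda>x. (m/r)^2 * G x) (UNIV - F)"
    by (rule infsum_mono[OF _ summable_on_cmult_right[OF GF]]) (use bound norms in auto)
  also have "\<dots> = (m/r)^2 * infsum G (UNIV - F)" by (rule infsum_cmult_right')
  also have "\<dots> \<le> (m/r)^2 * infsum G UNIV"
    by (intro mult_left_mono infsum_mono_neutral[OF GF G]) (auto simp: G0)
  finally show ?thesis by (simp add: m_def G_def)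
qed

lemma bps_has_derivative_at_0:
  assumes b: "bps_conv b \<sigma>" and \<sigma>: "0 < \<sigma>"
  shows "(bps b has_derivative (\<lambda>v. b 1 0 * fst v + b 0 1 * snd v)) (at 0)"
  unfolding has_derivative_at_alt
proof (intro conjI allI impI)
  show "bounded_linear (\<lambda>v::real \<times> real. b 1 0 * fst v + b 0 1 * snd v)"
    by (intro bounded_linear_add bounded_linear_compose[OF bounded_linear_mult_right]
        bounded_linear_fst bounded_linear_snd)
  fix e :: real assume e: "0 < e"
  define r where "r = \<sigma> / 2"
  have r: "0 < r" "r < \<sigma>" using \<sigma> by (auto simp: r_def)
  define M where "M = infsum (\<lambda>(i,j). \<bar>b i j\<bar> * r^(i+j)) UNIV"
  have M: "0 \<le> M" unfolding M_def by (rule infsum_nonneg) (use r in auto)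
  define d where "d = min r (e * r^2 / (M + 1))"
  show "\<exists>d>0. \<forall>y. norm (y - 0) < d \<longrightarrow>
      norm (bps b y - bps b 0 - (b 1 0 * fst (y - 0) + b 0 1 * snd (y - 0))) \<le> e * norm (y - 0)"
  proof (intro exI[of _ d] conjI allI impI)
    show "0 < d" using r e M by (auto simp: d_def)
    fix y :: "real \<times> real" assume y: "norm (y - 0) < d"
    obtain u w where uw: "y = (u,w)" by fastforce
    define m where "m = max \<bar>u\<bar> \<bar>w\<bar>"
    have "m \<le> norm y"
      using norm_fst_le[of u w] norm_snd_le[of w u] by (auto simp: uw m_def)
    then have m: "0 \<le> m" "m \<le> norm y" "m < d" using y by (auto simp: m_def)
    have "m * M \<le> e * r^2"
    proof -
      have "m * M \<le> (e * r^2 / (M + 1)) * M" using m M by (intro mult_right_mono) (auto simp: d_def)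
      also have "\<dots> \<le> e * r^2" using M e r by (simp add: field_simps)
      finally show ?thesis .
    qed
    then have "(m/r)^2 * M \<le> e * m"
      using r m(1) mult_left_mono[OF \<open>m * M \<le> e * r^2\<close> m(1)]
      by (simp add: power_divide field_simps power2_eq_square)
    moreover have "\<bar>bps b (u,w) - (b 0 0 + b 1 0 * u + b 0 1 * w)\<bar> \<le> (m/r)^2 * M"
      unfolding m_def M_def by (rule bps_remainder_bound[OF b r]) (use m in \<open>auto simp: m_def d_def\<close>)
    moreover have "e * m \<le> e * norm y" using m e by (intro mult_left_mono) auto
    ultimately have "\<bar>bps b (u,w) - (b 0 0 + b 1 0 * u + b 0 1 * w)\<bar> \<le> e * norm y" by linarith
    then show "norm (bps b y - bps b 0 - (b 1 0 * fst (y - 0) + b 0 1 * snd (y - 0))) \<le> e * norm (y - 0)"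
      by (simp add: uw bps_at_0 algebra_simps)
  qed
qed

lemma bps_has_derivative:
  assumes a: "bps_conv a \<rho>" and q: "q \<in> open_square \<rho>"
  shows "(bps a has_derivative (\<lambda>v. bps (bps_dx a) q * fst v + bps (bps_dy a) q * snd v)) (at q)"
proof -
  define \<sigma> where "\<sigma> = \<rho> - max \<bar>fst q\<bar> \<bar>snd q\<bar>"
  have \<sigma>: "0 < \<sigma>" using q by (auto simp: open_square_def \<sigma>_def)
  have "(bps (bps_shift a q) has_derivative (\<lambda>v. bps (bps_dx a) q * fst v + bps (bps_dy a) q * snd v)) (at 0)"
    using bps_has_derivative_at_0[OF bps_conv_shift[OF a q] \<sigma>[unfolded \<sigma>_def]]
    unfolding bps_shift_coeff_10 bps_shift_coeff_01 .
  then have "((\<lambda>v. bps a (q + v)) has_derivative (\<lambda>v. bps (bps_dx a) q * fst v + bps (bps_dy a) q * snd v)) (at 0)"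
  proof (rule has_derivative_transform_within_open[OF _ open_open_square[of \<sigma>]])
    show "0 \<in> open_square \<sigma>" using \<sigma> by (simp add: open_square_def)
    show "bps (bps_shift a q) v = bps a (q + v)" if "v \<in> open_square \<sigma>" for v
      using bps_shift[OF a q] that by (simp add: \<sigma>_def)
  qed
  then have shifted: "((\<lambda>v. bps a (q + v)) has_derivative (\<lambda>v. bps (bps_dx a) q * fst v + bps (bps_dy a) q * snd v))
      (at ((\<lambda>x. x - q) q))"
    by simp
  have "((\<lambda>x. x - q) has_derivative (\<lambda>h. h)) (at q)"
    using has_derivative_diff[OF has_derivative_ident has_derivative_const[of q]] by simp
  from has_derivative_compose[OF this shifted] show ?thesis by simp
qed

lemma partials_of_has_derivative:
  assumes "(f has_derivative (\<lambda>v. A * fst v + B * snd v)) (at q)"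
  shows "px f q = A" and "py f q = B"
proof -
  have "((\<lambda>t. (t, snd q)) has_derivative (\<lambda>h. (h, 0))) (at (fst q))"
    by (rule has_derivative_Pair[OF has_derivative_ident has_derivative_const])
  moreover have "(f has_derivative (\<lambda>v. A * fst v + B * snd v)) (at ((\<lambda>t. (t, snd q)) (fst q)))"
    using assms by simp
  ultimately have "((\<lambda>t. f (t, snd q)) has_derivative (*) A) (at (fst q))"
    using has_derivative_compose by fastforce
  then show "px f q = A"
    by (simp add: px_def DERIV_imp_deriv has_field_derivative_def)
  have "((\<lambda>t. (fst q, t)) has_derivative (\<lambda>h. (0, h))) (at (snd q))"
    by (rule has_derivative_Pair[OF has_derivative_const has_derivative_ident])
  moreover have "(f has_derivative (\<lambda>v. A * fst v + B * snd v)) (at ((\<lambda>t. (fst q, t)) (snd q)))"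
    using assms by simp
  ultimately have "((\<lambda>t. f (fst q, t)) has_derivative (*) B) (at (snd q))"
    using has_derivative_compose by fastforce
  then show "py f q = B"
    by (simp add: py_def DERIV_imp_deriv has_field_derivative_def)
qed

context
  fixes f :: "real \<times> real \<Rightarrow> real" and a :: "nat \<Rightarrow> nat \<Rightarrow> real" and \<rho> :: real
  assumes f: "has_bps_expansion f a \<rho>"
begin

lemma has_bps_expansion_has_derivative:
  assumes "q \<in> open_square \<rho>"
  shows "(f has_derivative (\<lambda>v. bps (bps_dx a) q * fst v + bps (bps_dy a) q * snd v)) (at q)"
proof (rule has_derivative_transform_within_open[OF _ open_open_square assms])
  show "(bps a has_derivative (\<lambda>v. bps (bps_dx a) q * fst v + bps (bps_dy a) q * snd v)) (at q)"
    using f by (intro bps_has_derivative[OF _ assms]) (simp add: has_bps_expansion_def)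
  show "bps a x = f x" if "x \<in> open_square \<rho>" for x
    using f that by (simp add: has_bps_expansion_def)
qed

lemma has_bps_expansion_px: "has_bps_expansion (px f) (bps_dx a) \<rho>"
  using partials_of_has_derivative(1)[OF has_bps_expansion_has_derivative] f bps_conv_dx
  by (auto simp: has_bps_expansion_def)

lemma has_bps_expansion_py: "has_bps_expansion (py f) (bps_dy a) \<rho>"
  using partials_of_has_derivative(2)[OF has_bps_expansion_has_derivative] f bps_conv_dy
  by (auto simp: has_bps_expansion_def)

lemma has_bps_expansion_has_derivative_grad:
  assumes "q \<in> open_square \<rho>"
  shows "(f has_derivative (\<lambda>v. inner (grad f q) v)) (at q)"
  using has_bps_expansion_has_derivative[OF assms] has_bps_expansion_px has_bps_expansion_py assms
  by (simp add: has_bps_expansion_def grad_def inner_prod_def)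

lemma has_bps_expansion_isCont: "q \<in> open_square \<rho> \<Longrightarrow> isCont f q"
  using has_bps_expansion_has_derivative has_derivative_continuous by blast

lemma has_bps_expansion_mono: "\<rho>' \<le> \<rho> \<Longrightarrow> has_bps_expansion f a \<rho>'"
  using f bps_conv_mono by (auto simp: has_bps_expansion_def open_square_def)

end

section \<open>Real analyticity and the identity theorem\<close>

lemma real_analytic_on2_local_expansion:
  assumes "real_analytic_on2 f U" "p \<in> U"
  obtains a \<rho> where "0 < \<rho>" "ball p (2 * \<rho>) \<subseteq> U" "has_bps_expansion (\<lambda>v. f (p + v)) a \<rho>"
proof -
  obtain r a where r: "0 < r" "ball p r \<subseteq> U"
    and a: "\<And>q. q \<in> ball p r \<Longrightarrow> ((\<lambda>(i,j). a i j * (fst q - fst p) ^ i * (snd q - snd p) ^ j) has_sum f q) UNIV"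
    using assms unfolding real_analytic_on2_def by blast
  have sum: "(bps_term a v has_sum f (p + v)) UNIV" if "norm v < r" for v
    using a[of "p + v"] that by (simp add: bps_term_def dist_norm)
  have "bps_conv a (r/2)"
    unfolding bps_conv_def
  proof (intro allI impI)
    fix s assume s: "0 < s \<and> s < r/2"
    have "norm (s,s) < r" using norm_prod_le_abs_sum[of "(s,s)"] s by simp
    then have "(\<lambda>x. norm (bps_term a (s,s) x)) summable_on UNIV"
      using sum summable_on_iff_abs_summable_on_real has_sum_imp_summable by blast
    then show "(\<lambda>(i,j). \<bar>a i j\<bar> * s ^ (i+j)) summable_on UNIV"
      by (rule summable_on_cong[THEN iffD1, rotated]) (use s in \<open>auto simp: bps_term_def abs_mult power_abs power_add\<close>)
  qed
  moreover have "f (p + v) = bps a v" if "v \<in> open_square (r/2)" for v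
    using sum[of v] that open_square_subset_ball[of "r/2"] by (auto simp: bps_def infsumI)
  ultimately show ?thesis
    using that[of "r/2" a] r by (simp add: has_bps_expansion_def)
qed

lemma real_analytic_on2_expansion_near_0:
  assumes "real_analytic_on2 f U" "0 \<in> U" "0 < \<epsilon>"
  obtains c \<delta> where "0 < \<delta>" "\<delta> \<le> \<epsilon>" "has_bps_expansion f c \<delta>"
proof -
  obtain c \<rho> where "0 < \<rho>" "has_bps_expansion (\<lambda>v. f (0 + v)) c \<rho>"
    using real_analytic_on2_local_expansion[OF assms(1,2)] by blast
  then show ?thesis
    using that[of "min \<rho> \<epsilon>" c] has_bps_expansion_mono[of f c \<rho> "min \<rho> \<epsilon>"] assms(3) by simp
qed

lemma has_bps_expansion_real_analytic_on2:
  assumes f: "has_bps_expansion f a \<rho>"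
  shows "real_analytic_on2 f (open_square \<rho>)"
  unfolding real_analytic_on2_def
proof
  fix q0 assume q0: "q0 \<in> open_square \<rho>"
  define \<sigma> where "\<sigma> = \<rho> - max \<bar>fst q0\<bar> \<bar>snd q0\<bar>"
  have a: "bps_conv a \<rho>" using f by (simp add: has_bps_expansion_def)
  have in_square: "q0 + v \<in> open_square \<rho>" if "v \<in> open_square \<sigma>" for v
    using that abs_triangle_ineq[of "fst q0" "fst v"] abs_triangle_ineq[of "snd q0" "snd v"]
    unfolding open_square_def \<sigma>_def by (simp add: max_def split: if_splits)
  show "\<exists>r>0. ball q0 r \<subseteq> open_square \<rho> \<and> (\<exists>b. \<forall>q\<in>ball q0 r.
      ((\<lambda>(i,j). b i j * (fst q - fst q0) ^ i * (snd q - snd q0) ^ j) has_sum f q) UNIV)"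
  proof (intro exI conjI ballI)
    show "0 < \<sigma>" using q0 by (auto simp: open_square_def \<sigma>_def)
    have sq: "q - q0 \<in> open_square \<sigma>" if "q \<in> ball q0 \<sigma>" for q
      using that ball_subset_open_square[of \<sigma>] by (auto simp: dist_norm norm_minus_commute)
    show "ball q0 \<sigma> \<subseteq> open_square \<rho>" using in_square[OF sq] by force
    fix q assume q: "q \<in> ball q0 \<sigma>"
    have "(bps_term (bps_shift a q0) (q - q0) has_sum bps (bps_shift a q0) (q - q0)) UNIV"
      by (rule bps_has_sum[OF bps_conv_shift[OF a q0] sq[OF q, unfolded \<sigma>_def]])
    moreover have "bps (bps_shift a q0) (q - q0) = f q"
      using bps_shift[OF a q0 sq[OF q, unfolded \<sigma>_def]] f in_square[OF sq[OF q]]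
      by (simp add: has_bps_expansion_def)
    ultimately show "((\<lambda>(i,j). bps_shift a q0 i j * (fst q - fst q0) ^ i * (snd q - snd q0) ^ j) has_sum f q) UNIV"
      by (simp add: bps_term_def)
  qed
qed

lemma real_analytic_on2_subset:
  assumes f: "real_analytic_on2 f U" and V: "open V" "V \<subseteq> U"
  shows "real_analytic_on2 f V"
  unfolding real_analytic_on2_def
proof
  fix p assume p: "p \<in> V"
  obtain r a where r: "0 < r" "ball p r \<subseteq> U"
    and a: "\<forall>q\<in>ball p r. ((\<lambda>(i,j). a i j * (fst q - fst p) ^ i * (snd q - snd p) ^ j) has_sum f q) UNIV"
    using f p V(2) unfolding real_analytic_on2_def by blast
  obtain e where e: "0 < e" "ball p e \<subseteq> V" using V(1) p open_contains_ball by blast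
  show "\<exists>r>0. ball p r \<subseteq> V \<and> (\<exists>a. \<forall>q\<in>ball p r.
      ((\<lambda>(i,j). a i j * (fst q - fst p) ^ i * (snd q - snd p) ^ j) has_sum f q) UNIV)"
    using r e a by (intro exI[of _ "min r e"] conjI exI[of _ a]) auto
qed

lemma real_analytic_vf_on_subset:
  "real_analytic_vf_on W U \<Longrightarrow> open V \<Longrightarrow> V \<subseteq> U \<Longrightarrow> real_analytic_vf_on W V"
  by (meson real_analytic_vf_on_def real_analytic_on2_subset)

lemma bps_fst_axis_eq_0: "(\<And>i. b i 0 = 0) \<Longrightarrow> bps b (s,0) = 0"
  unfolding bps_def bps_term_def by (intro infsum_0) (auto simp: power_0_left)

lemma bps_fst_axis_nonzero:
  assumes b: "bps_conv b \<rho>" and \<rho>: "0 < \<rho>" and nz: "b i0 0 \<noteq> 0"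
  obtains \<epsilon> where "0 < \<epsilon>" "\<And>s. 0 < \<bar>s\<bar> \<Longrightarrow> \<bar>s\<bar> < \<epsilon> \<Longrightarrow> bps b (s,0) \<noteq> 0"
proof -
  define row :: "nat \<Rightarrow> nat \<Rightarrow> real" where "row = (\<lambda>i j. if j = 0 then b i 0 else 0)"
  define N where "N = (LEAST i. b i 0 \<noteq> 0)"
  have bN: "b N 0 \<noteq> 0" unfolding N_def by (rule LeastI[of _ i0]) (rule nz)
  have row_zero: "row i j = 0" if "i < N" for i j
    using not_less_Least[OF that[unfolded N_def]] by (auto simp: row_def)
  have row: "bps_conv row \<rho>"
    using b unfolding bps_conv_def
    by (auto elim!: summable_on_comparison_test simp: row_def split: prod.split)
  have on_axis: "bps b (s,0) = bps row (s,0)" for s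
    unfolding bps_def bps_term_def row_def by (intro infsum_cong) (auto simp: zero_power)
  define c where "c = (\<lambda>i j. row (i+N) j)"
  have c: "bps_conv c \<rho>" unfolding c_def by (rule bps_conv_drop_fst[OF row])
  have "isCont (bps c) 0"
    using has_bps_expansion_isCont[of "bps c" c \<rho> 0] c \<rho> by (simp add: has_bps_expansion_def open_square_def)
  moreover have "bps c 0 \<noteq> 0" using bN by (simp add: bps_at_0 c_def row_def)
  ultimately obtain e where e: "0 < e" "\<And>y. dist 0 y < e \<Longrightarrow> bps c y \<noteq> 0"
    using continuous_at_avoid by blast
  show ?thesis
  proof (rule that[of "min e \<rho>"])
    show "0 < min e \<rho>" using e \<rho> by simp
    fix s :: real assume s: "0 < \<bar>s\<bar>" "\<bar>s\<bar> < min e \<rho>"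
    then have "(s,0) \<in> open_square \<rho>" using \<rho> by (simp add: open_square_def)
    then have "bps b (s,0) = s^N * bps c (s,0)"
      using bps_factor_fst[OF row row_zero] by (simp add: on_axis c_def)
    moreover have "bps c (s,0) \<noteq> 0" using s by (intro e(2)) (simp add: dist_norm zero_prod_def)
    ultimately show "bps b (s,0) \<noteq> 0" using s by simp
  qed
qed

lemma bps_fst_axis_coeff_eq_0:
  assumes b: "bps_conv b \<rho>" "0 < \<rho>" and e: "0 < e" and zero: "\<And>s. \<bar>s\<bar> < e \<Longrightarrow> bps b (s,0) = 0"
  shows "b i 0 = 0"
proof (rule ccontr)
  assume "b i 0 \<noteq> 0"
  then obtain \<epsilon> where \<epsilon>: "0 < \<epsilon>" "\<And>s. 0 < \<bar>s\<bar> \<Longrightarrow> \<bar>s\<bar> < \<epsilon> \<Longrightarrow> bps b (s,0) \<noteq> 0"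
    using bps_fst_axis_nonzero[OF b] by blast
  have "bps b (min \<epsilon> e / 2, 0) \<noteq> 0" using \<epsilon> e by (intro \<epsilon>(2)) auto
  then show False using zero[of "min \<epsilon> e / 2"] \<epsilon> e by simp
qed

lemma bps_fst_axis_dichotomy:
  assumes "bps_conv b \<rho>" "0 < \<rho>"
  shows "(\<forall>s. bps b (s,0) = 0) \<or> (\<exists>\<epsilon>>0. \<forall>s. 0 < \<bar>s\<bar> \<longrightarrow> \<bar>s\<bar> < \<epsilon> \<longrightarrow> bps b (s,0) \<noteq> 0)"
  using bps_fst_axis_eq_0[of b] bps_fst_axis_nonzero[OF assms] by metis

text \<open>The interior of the zero set is relatively closed in the interval, by \<open>bps_fst_axis_dichotomy\<close>.\<close>
lemma locally_bps_eq_0_on_interval: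
  assumes loc: "\<And>w. \<bar>w\<bar> < R \<Longrightarrow> \<exists>r>0. \<exists>b. bps_conv b r \<and> (\<forall>v. \<bar>v - w\<bar> < r \<longrightarrow> k v = bps b (v - w, 0))"
    and e: "0 < \<epsilon>" and zero: "\<And>v. \<bar>v\<bar> < \<epsilon> \<Longrightarrow> k v = 0" and v: "\<bar>v\<bar> < R"
  shows "k v = 0"
proof -
  define A where "A = {-R<..<R}"
  define Z where "Z = interior {v. k v = 0}"
  have cover: "A \<subseteq> Z \<union> - closure Z"
  proof
    fix w assume "w \<in> A"
    then have "\<bar>w\<bar> < R" by (auto simp: A_def)
    then obtain r b where r: "0 < r" "bps_conv b r" and kb: "\<And>v. \<bar>v - w\<bar> < r \<Longrightarrow> k v = bps b (v - w, 0)"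
      using loc by blast
    from bps_fst_axis_dichotomy[OF r(2,1)] show "w \<in> Z \<union> - closure Z"
    proof
      assume "\<forall>s. bps b (s,0) = 0"
      then have "ball w r \<subseteq> Z"
        unfolding Z_def using kb by (intro interior_maximal) (auto simp: dist_real_def)
      then show ?thesis using centre_in_ball[of w r] r(1) by blast
    next
      assume "\<exists>\<epsilon>>0. \<forall>s. 0 < \<bar>s\<bar> \<longrightarrow> \<bar>s\<bar> < \<epsilon> \<longrightarrow> bps b (s,0) \<noteq> 0"
      then obtain \<epsilon>' where \<epsilon>': "0 < \<epsilon>'" "\<And>s. 0 < \<bar>s\<bar> \<Longrightarrow> \<bar>s\<bar> < \<epsilon>' \<Longrightarrow> bps b (s,0) \<noteq> 0"
        by blast
      have "k v \<noteq> 0" if "v \<in> ball w (min \<epsilon>' r) - {w}" for v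
        using that \<epsilon>'(2)[of "v - w"] kb[of v] by (auto simp: dist_real_def abs_minus_commute)
      then have "w \<in> Z \<or> ball w (min \<epsilon>' r) \<inter> Z = {}"
        using interior_subset[of "{v. k v = 0}"] unfolding Z_def by blast
      moreover have "w \<in> ball w (min \<epsilon>' r)" using \<epsilon>' r by simp
      ultimately show ?thesis
        using open_Int_closure_eq_empty[of "ball w (min \<epsilon>' r)" Z] by blast
    qed
  qed
  have "Z \<inter> A = {} \<or> - closure Z \<inter> A = {}"
    by (rule connectedD) (use cover closure_subset[of Z] in \<open>auto simp: A_def Z_def\<close>)
  moreover have "0 \<in> Z"
  proof -
    have "ball 0 \<epsilon> \<subseteq> Z" unfolding Z_def by (rule interior_maximal) (use zero in auto)
    then show ?thesis using e by auto
  qed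
  moreover have "0 \<in> A" "v \<in> A" using v by (auto simp: A_def abs_less_iff)
  ultimately have "v \<in> Z" using cover by blast
  then show ?thesis using interior_subset[of "{v. k v = 0}"] by (auto simp: Z_def)
qed

lemma real_analytic_on2_line_expansion:
  assumes h: "real_analytic_on2 h (ball 0 R)" and u: "norm u = 1" and w: "\<bar>w\<bar> < R"
  shows "\<exists>r>0. \<exists>b. bps_conv b r \<and> (\<forall>v. \<bar>v - w\<bar> < r \<longrightarrow> h (v *\<^sub>R u) = bps b (v - w, 0))"
proof -
  have "w *\<^sub>R u \<in> ball 0 R" using w u by simp
  then obtain a \<rho> where \<rho>: "0 < \<rho>" and a: "has_bps_expansion (\<lambda>x. h (w *\<^sub>R u + x)) a \<rho>"
    using real_analytic_on2_local_expansion[OF h] by blast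
  have "\<bar>fst u\<bar> + \<bar>0\<bar> \<le> 1" "\<bar>snd u\<bar> + \<bar>0\<bar> \<le> 1"
    using u norm_fst_le[of "fst u" "snd u"] norm_snd_le[of "snd u" "fst u"] by auto
  from has_bps_expansion_linear_subst[OF a zero_less_one this]
  obtain b where b: "has_bps_expansion (\<lambda>q. h (w *\<^sub>R u + (fst u * fst q + 0 * snd q, snd u * fst q + 0 * snd q))) b \<rho>"
    by auto
  have "h (v *\<^sub>R u) = bps b (v - w, 0)" if v: "\<bar>v - w\<bar> < \<rho>" for v
  proof -
    have "v *\<^sub>R u = w *\<^sub>R u + (fst u * fst (v - w, 0::real) + 0 * snd (v - w, 0::real), snd u * fst (v - w, 0::real) + 0 * snd (v - w, 0::real))"
      by (simp add: prod_eq_iff algebra_simps)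
    moreover have "(v - w, 0) \<in> open_square \<rho>" using v \<rho> by (simp add: open_square_def)
    ultimately show ?thesis using b unfolding has_bps_expansion_def by metis
  qed
  then show ?thesis using \<rho> b unfolding has_bps_expansion_def by blast
qed

lemma real_analytic_on2_eq_0_on_ball:
  assumes h: "real_analytic_on2 h (ball 0 R)" and e: "0 < \<epsilon>" and zero: "\<And>q. q \<in> ball 0 \<epsilon> \<Longrightarrow> h q = 0"
    and q: "q \<in> ball 0 R"
  shows "h q = 0"
proof (cases "q = 0")
  case True then show ?thesis using zero e by simp
next
  case False
  define u where "u = (1 / norm q) *\<^sub>R q"
  have u: "norm u = 1" using False by (simp add: u_def)
  have "h (norm q *\<^sub>R u) = 0"
  proof (rule locally_bps_eq_0_on_interval[where k="\<lambda>w. h (w *\<^sub>R u)"])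
    show "\<exists>r>0. \<exists>b. bps_conv b r \<and> (\<forall>v. \<bar>v - w\<bar> < r \<longrightarrow> h (v *\<^sub>R u) = bps b (v - w, 0))"
      if "\<bar>w\<bar> < R" for w
      using real_analytic_on2_line_expansion[OF h u that] .
    show "h (v *\<^sub>R u) = 0" if "\<bar>v\<bar> < \<epsilon>" for v
      using that u by (intro zero) simp
    show "\<bar>norm q\<bar> < R" using q by simp
  qed (rule e)
  then show ?thesis using False by (simp add: u_def)
qed

section \<open>Frames in the plane\<close>

definition rot90 :: "real \<times> real \<Rightarrow> real \<times> real" where
  "rot90 v = (- snd v, fst v)"

lemma norm_rot90 [simp]: "norm (rot90 v) = norm v"
  by (cases v) (simp add: rot90_def norm_Pair add.commute)

lemma inner_rot90_self [simp]: "inner v (rot90 v) = 0" "inner (rot90 v) v = 0"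
  by (simp_all add: rot90_def inner_prod_def algebra_simps)

lemma unit_vector_expansion:
  assumes "norm d = 1"
  shows "v = inner v d *\<^sub>R d + inner v (rot90 d) *\<^sub>R rot90 d"
proof -
  obtain v1 v2 d1 d2 where v: "v = (v1,v2)" and d: "d = (d1,d2)" by fastforce
  have unit: "d1^2 + d2^2 = 1" using assms by (simp add: d norm_Pair)
  have "(v1 * d1 + v2 * d2) * d1 + (v1 * (- d2) + v2 * d1) * (- d2) = v1 * (d1^2 + d2^2)"
    "(v1 * d1 + v2 * d2) * d2 + (v1 * (- d2) + v2 * d1) * d1 = v2 * (d1^2 + d2^2)"
    by (simp_all add: algebra_simps power2_eq_square)
  then show ?thesis using unit by (simp add: v d rot90_def inner_prod_def)
qed

lemma abs_inner_le_norm: "norm v = 1 \<Longrightarrow> \<bar>inner q v\<bar> \<le> norm q"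
  using Cauchy_Schwarz_ineq2[of q v] by simp

lemma frame_in_open_square:
  assumes "norm d = 1" "q \<in> ball 0 \<sigma>"
  shows "(inner q d, inner q (rot90 d)) \<in> open_square \<sigma>"
  using assms abs_inner_le_norm[of d q] abs_inner_le_norm[of "rot90 d" q] by (auto simp: open_square_def)

lemma span_scaleR_singleton:
  fixes x :: "'a::real_vector"
  assumes "c \<noteq> 0"
  shows "span {c *\<^sub>R x} = span {x}"
proof -
  have "x = inverse c *\<^sub>R (c *\<^sub>R x)" using assms by simp
  then have "x \<in> span {c *\<^sub>R x}" by (metis span_base span_scale singletonI)
  then show ?thesis unfolding span_eq by (auto intro: span_scale span_base)
qed

lemma constant_along_line:
  fixes f :: "real \<times> real \<Rightarrow> real"
  assumes I: "convex I" "0 \<in> I" "s \<in> I"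
    and der: "\<And>t. t \<in> I \<Longrightarrow> (f has_derivative (\<lambda>v. inner (G t) v)) (at (p + t *\<^sub>R w))"
    and orth: "\<And>t. t \<in> I \<Longrightarrow> inner (G t) w = 0"
  shows "f (p + s *\<^sub>R w) = f p"
proof -
  have "((\<lambda>t. f (p + t *\<^sub>R w)) has_derivative (\<lambda>h. 0)) (at t within I)" if t: "t \<in> I" for t
  proof -
    have "((\<lambda>t. p + t *\<^sub>R w) has_derivative (\<lambda>h. h *\<^sub>R w)) (at t within I)"
      by (auto intro!: derivative_eq_intros)
    from has_derivative_compose[OF this der[OF t]]
    have "((\<lambda>t. f (p + t *\<^sub>R w)) has_derivative (\<lambda>h. inner (G t) (h *\<^sub>R w))) (at t within I)"
      by simp
    then show ?thesis using orth[OF t] by simp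
  qed
  then obtain c where "\<And>t. t \<in> I \<Longrightarrow> f (p + t *\<^sub>R w) = c"
    using has_derivative_zero_constant[OF I(1)] by blast
  from this[OF I(3)] this[OF I(2)] show ?thesis by simp
qed

lemma transverse_coordinates:
  fixes d \<nu> :: "real \<times> real"
  assumes d: "norm d = 1" and \<nu>: "norm \<nu> = 1" "\<nu> \<notin> span {d}"
  obtains C where "0 < C" "\<And>q. \<exists>s \<tau>. q = s *\<^sub>R d + \<tau> *\<^sub>R \<nu> \<and> \<bar>s\<bar> \<le> C * norm q \<and> \<bar>\<tau>\<bar> \<le> C * norm q"
proof -
  define D where "D = inner \<nu> (rot90 d)"
  have "D \<noteq> 0"
  proof
    assume "D = 0"
    then have "\<nu> = inner \<nu> d *\<^sub>R d" using unit_vector_expansion[OF d, of \<nu>] by (simp add: D_def)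
    then have "\<nu> \<in> span {d}" by (metis span_base span_scale singletonI)
    then show False using \<nu> by simp
  qed
  have "\<exists>s \<tau>. q = s *\<^sub>R d + \<tau> *\<^sub>R \<nu> \<and> \<bar>s\<bar> \<le> (1 / \<bar>D\<bar>) * norm q \<and> \<bar>\<tau>\<bar> \<le> (1 / \<bar>D\<bar>) * norm q" for q
  proof (intro exI conjI)
    have "- inner q (rot90 \<nu>) * fst d + inner q (rot90 d) * fst \<nu> = fst q * D"
      "- inner q (rot90 \<nu>) * snd d + inner q (rot90 d) * snd \<nu> = snd q * D"
      by (simp_all add: D_def rot90_def inner_prod_def algebra_simps)
    then show "q = (- inner q (rot90 \<nu>) / D) *\<^sub>R d + (inner q (rot90 d) / D) *\<^sub>R \<nu>"
      using \<open>D \<noteq> 0\<close> by (auto simp: prod_eq_iff field_simps)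
    show "\<bar>- inner q (rot90 \<nu>) / D\<bar> \<le> (1 / \<bar>D\<bar>) * norm q" "\<bar>inner q (rot90 d) / D\<bar> \<le> (1 / \<bar>D\<bar>) * norm q"
      using abs_inner_le_norm[of "rot90 \<nu>" q] abs_inner_le_norm[of "rot90 d" q] d \<nu>
      by (simp_all add: abs_divide divide_right_mono)
  qed
  then show ?thesis using that[of "1 / \<bar>D\<bar>"] \<open>D \<noteq> 0\<close> by simp
qed

section \<open>The transverse derivative\<close>

text \<open>Connect 0 to \<open>s d + \<tau> \<nu>\<close> by a segment along \<open>d\<close> followed by one along \<open>\<nu>\<close>.\<close>
lemma eq_0_near_0_of_directional_derivatives:
  fixes f :: "real \<times> real \<Rightarrow> real"
  assumes \<rho>: "0 < \<rho>"
    and der: "\<And>q. q \<in> ball 0 \<rho> \<Longrightarrow> (f has_derivative (\<lambda>v. inner (grad f q) v)) (at q)"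
    and d: "norm d = 1" and \<nu>: "norm \<nu> = 1" "\<nu> \<notin> span {d}" and f0: "f 0 = 0"
    and along: "\<And>s. \<bar>s\<bar> < \<rho> \<Longrightarrow> inner (grad f (s *\<^sub>R d)) d = 0"
    and across: "\<And>q. q \<in> ball 0 \<rho> \<Longrightarrow> inner (grad f q) \<nu> = 0"
  obtains \<epsilon> where "0 < \<epsilon>" "\<And>q. q \<in> ball 0 \<epsilon> \<Longrightarrow> f q = 0"
proof -
  obtain C where C: "0 < C" "\<And>q. \<exists>s \<tau>. q = s *\<^sub>R d + \<tau> *\<^sub>R \<nu> \<and> \<bar>s\<bar> \<le> C * norm q \<and> \<bar>\<tau>\<bar> \<le> C * norm q"
    using transverse_coordinates[OF d \<nu>] by blast
  define \<epsilon> where "\<epsilon> = \<rho> / (2 * C + 1)"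
  have \<epsilon>: "0 < \<epsilon>" "2 * C * \<epsilon> < \<rho>" using \<rho> C by (auto simp: \<epsilon>_def field_simps)
  have "f q = 0" if q: "q \<in> ball 0 \<epsilon>" for q
  proof -
    obtain s \<tau> where q_eq: "q = s *\<^sub>R d + \<tau> *\<^sub>R \<nu>" and st: "\<bar>s\<bar> \<le> C * norm q" "\<bar>\<tau>\<bar> \<le> C * norm q"
      using C(2) by blast
    have "C * norm q \<le> C * \<epsilon>" using q C by simp
    then have small: "\<bar>s\<bar> + \<bar>\<tau>\<bar> < \<rho>" using st \<epsilon> by linarith
    have "f (0 + s *\<^sub>R d) = f 0"
    proof (rule constant_along_line[where G="\<lambda>t. grad f (t *\<^sub>R d)" and I="{-\<rho><..<\<rho>}"])
      fix t assume "t \<in> {-\<rho><..<\<rho>}"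
      then have t: "\<bar>t\<bar> < \<rho>" by auto
      show "(f has_derivative (\<lambda>v. inner (grad f (t *\<^sub>R d)) v)) (at (0 + t *\<^sub>R d))"
        using der[of "t *\<^sub>R d"] t d by simp
      show "inner (grad f (t *\<^sub>R d)) d = 0" by (rule along[OF t])
    qed (use small \<rho> in auto)
    moreover have "f (s *\<^sub>R d + \<tau> *\<^sub>R \<nu>) = f (s *\<^sub>R d)"
    proof (rule constant_along_line[where G="\<lambda>t. grad f (s *\<^sub>R d + t *\<^sub>R \<nu>)" and I="{min 0 \<tau> .. max 0 \<tau>}"])
      fix t assume "t \<in> {min 0 \<tau> .. max 0 \<tau>}"
      then have "\<bar>t\<bar> \<le> \<bar>\<tau>\<bar>" by auto
      moreover have "norm (s *\<^sub>R d + t *\<^sub>R \<nu>) \<le> \<bar>s\<bar> + \<bar>t\<bar>"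
        using norm_triangle_ineq[of "s *\<^sub>R d" "t *\<^sub>R \<nu>"] d \<nu> by simp
      ultimately have "s *\<^sub>R d + t *\<^sub>R \<nu> \<in> ball 0 \<rho>" using small by simp
      then show "(f has_derivative (\<lambda>v. inner (grad f (s *\<^sub>R d + t *\<^sub>R \<nu>)) v)) (at (s *\<^sub>R d + t *\<^sub>R \<nu>))"
        "inner (grad f (s *\<^sub>R d + t *\<^sub>R \<nu>)) \<nu> = 0"
        by (simp_all add: der across)
    qed auto
    ultimately show ?thesis using q_eq f0 by simp
  qed
  then show ?thesis using that \<epsilon> by blast
qed

lemma grad_eq_0_on_segment:
  assumes h: "has_bps_expansion h c \<rho>" and d: "norm d = 1" and \<delta>: "\<delta> \<le> \<rho>"
    and hess: "\<And>t. \<bar>t\<bar> < \<delta> \<Longrightarrow> hessian_zero_at h (t *\<^sub>R d)" and g0: "grad h 0 = 0"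
    and s: "\<bar>s\<bar> < \<delta>"
  shows "grad h (s *\<^sub>R d) = 0"
proof -
  have in_square: "t *\<^sub>R d \<in> open_square \<rho>" if "\<bar>t\<bar> < \<delta>" for t
    using that d \<delta> ball_subset_open_square[of \<rho>] by auto
  have const: "f (s *\<^sub>R d) = f 0"
    if f: "has_bps_expansion f b \<rho>" and orth: "\<And>t. \<bar>t\<bar> < \<delta> \<Longrightarrow> inner (grad f (t *\<^sub>R d)) d = 0" for f b
  proof -
    have "f (0 + s *\<^sub>R d) = f 0"
    proof (rule constant_along_line[where G="\<lambda>t. grad f (t *\<^sub>R d)" and I="{-\<delta><..<\<delta>}"])
      fix t assume "t \<in> {-\<delta><..<\<delta>}"
      then have t: "\<bar>t\<bar> < \<delta>" by auto
      show "(f has_derivative (\<lambda>v. inner (grad f (t *\<^sub>R d)) v)) (at (0 + t *\<^sub>R d))"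
        using has_bps_expansion_has_derivative_grad[OF f in_square[OF t]] by simp
      show "inner (grad f (t *\<^sub>R d)) d = 0" by (rule orth[OF t])
    qed (use s in auto)
    then show ?thesis by simp
  qed
  have "px h (s *\<^sub>R d) = px h 0" "py h (s *\<^sub>R d) = py h 0"
    using hess
    by (auto intro!: const has_bps_expansion_px has_bps_expansion_py h
        simp: hessian_zero_at_def grad_def inner_prod_def)
  then show ?thesis using g0 by (simp add: grad_def zero_prod_def)
qed

lemma has_bps_expansion_dirderiv:
  assumes "has_bps_expansion h c \<rho>"
  shows "has_bps_expansion (dirderiv h \<nu>) (\<lambda>i j. fst \<nu> * bps_dx c i j + snd \<nu> * bps_dy c i j) \<rho>"
proof -
  have "dirderiv h \<nu> = (\<lambda>q. fst \<nu> * px h q + snd \<nu> * py h q)"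
    by (simp add: fun_eq_iff dirderiv_def grad_def inner_prod_def mult.commute)
  then show ?thesis
    using has_bps_expansion_lincomb[OF has_bps_expansion_px[OF assms] has_bps_expansion_py[OF assms]] by simp
qed

lemma grad_not_eq_0_on_ball:
  assumes f: "has_bps_expansion f c \<rho>" and "0 < \<rho>" and "f 0 = 0"
    and nonzero: "\<not> (\<exists>\<epsilon>>0. \<forall>q\<in>ball 0 \<epsilon>. f q = 0)"
  shows "\<not> (\<forall>q\<in>ball 0 \<rho>. grad f q = 0)"
proof
  assume grad0: "\<forall>q\<in>ball 0 \<rho>. grad f q = 0"
  have "(f has_derivative (\<lambda>h. 0)) (at q within ball 0 \<rho>)" if q: "q \<in> ball 0 \<rho>" for q
  proof -
    have "q \<in> open_square \<rho>" using q ball_subset_open_square by blast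
    from has_bps_expansion_has_derivative_grad[OF f this] show ?thesis
      using grad0 q by (simp add: has_derivative_at_withinI)
  qed
  then obtain k where "\<And>q. q \<in> ball 0 \<rho> \<Longrightarrow> f q = k"
    using has_derivative_zero_constant[of "ball 0 \<rho>" f] by auto
  then have "\<forall>q\<in>ball 0 \<rho>. f q = 0" using assms by (metis centre_in_ball)
  then show False using nonzero \<open>0 < \<rho>\<close> by blast
qed

lemma dirderiv_not_eq_0_near_0:
  assumes analytic: "real_analytic_on2 h (ball 0 R)" and not_affine: "\<not> affine_linear_on h (ball 0 R)"
    and h: "has_bps_expansion h c \<rho>" "0 < \<rho>" and h0: "h 0 = 0"
    and d: "norm d = 1" and \<nu>: "norm \<nu> = 1" "\<nu> \<notin> span {d}"
    and grad_segment: "\<And>s. \<bar>s\<bar> < \<rho> \<Longrightarrow> grad h (s *\<^sub>R d) = 0"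
  shows "\<not> (\<exists>\<epsilon>>0. \<forall>q\<in>ball 0 \<epsilon>. dirderiv h \<nu> q = 0)"
proof
  assume "\<exists>\<epsilon>>0. \<forall>q\<in>ball 0 \<epsilon>. dirderiv h \<nu> q = 0"
  then obtain \<epsilon> where \<epsilon>: "0 < \<epsilon>" "\<And>q. q \<in> ball 0 \<epsilon> \<Longrightarrow> dirderiv h \<nu> q = 0" by blast
  obtain \<epsilon>' where \<epsilon>': "0 < \<epsilon>'" "\<And>q. q \<in> ball 0 \<epsilon>' \<Longrightarrow> h q = 0"
  proof (rule eq_0_near_0_of_directional_derivatives[of "min \<rho> \<epsilon>" h d \<nu>])
    show "(h has_derivative (\<lambda>v. inner (grad h q) v)) (at q)" if "q \<in> ball 0 (min \<rho> \<epsilon>)" for q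
      using that ball_subset_open_square[of \<rho>] by (intro has_bps_expansion_has_derivative_grad[OF h(1)]) auto
    show "inner (grad h q) \<nu> = 0" if "q \<in> ball 0 (min \<rho> \<epsilon>)" for q
      using \<epsilon>(2)[of q] that by (simp add: dirderiv_def)
  qed (use h \<epsilon> d \<nu> h0 grad_segment in auto)
  have "h q = 0" if "q \<in> ball 0 R" for q
    by (rule real_analytic_on2_eq_0_on_ball[OF analytic \<epsilon>' that])
  then have "affine_linear_on h (ball 0 R)" unfolding affine_linear_on_def by (intro exI[of _ 0]) simp
  then show False using not_affine by simp
qed

section \<open>The gradient of the transverse derivative\<close>

lemma has_bps_expansion_rotate:
  assumes f: "has_bps_expansion f c \<rho>" and d: "norm d = 1"
  obtains b where "has_bps_expansion (\<lambda>st. f (fst st *\<^sub>R d + snd st *\<^sub>R rot90 d)) b (\<rho> / 2)"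
proof -
  have "\<bar>fst d\<bar> + \<bar>- snd d\<bar> \<le> 2" "\<bar>snd d\<bar> + \<bar>fst d\<bar> \<le> 2"
    using d norm_fst_le[of "fst d" "snd d"] norm_snd_le[of "snd d" "fst d"] by auto
  from has_bps_expansion_linear_subst[OF f _ this] obtain b
    where "has_bps_expansion (\<lambda>q. f (fst d * fst q + - snd d * snd q, snd d * fst q + fst d * snd q)) b (\<rho> / 2)"
    by auto
  moreover have "fst st *\<^sub>R d + snd st *\<^sub>R rot90 d = (fst d * fst st + - snd d * snd st, snd d * fst st + fst d * snd st)"
    for st by (simp add: rot90_def prod_eq_iff mult.commute)
  ultimately show ?thesis using that by simp
qed

lemma grad_in_rotated_frame:
  assumes d: "norm d = 1" and der: "(f has_derivative (\<lambda>v. inner (grad f q) v)) (at q)"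
  defines "g \<equiv> \<lambda>st. f (fst st *\<^sub>R d + snd st *\<^sub>R rot90 d)"
  shows "grad f q = px g (inner q d, inner q (rot90 d)) *\<^sub>R d + py g (inner q d, inner q (rot90 d)) *\<^sub>R rot90 d"
proof -
  define rot where "rot = (\<lambda>st::real \<times> real. fst st *\<^sub>R d + snd st *\<^sub>R rot90 d)"
  define st where "st = (inner q d, inner q (rot90 d))"
  have "rot st = q" using unit_vector_expansion[OF d, of q] by (simp add: rot_def st_def)
  have "(rot has_derivative rot) (at st)"
    unfolding rot_def by (auto intro!: derivative_eq_intros)
  moreover have "(f has_derivative (\<lambda>v. inner (grad f q) v)) (at (rot st))"
    using der \<open>rot st = q\<close> by simp
  ultimately have "((\<lambda>x. f (rot x)) has_derivative (\<lambda>x. inner (grad f q) (rot x))) (at st)"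
    by (rule has_derivative_compose)
  moreover have "(\<lambda>x. inner (grad f q) (rot x)) = (\<lambda>v. inner (grad f q) d * fst v + inner (grad f q) (rot90 d) * snd v)"
    by (simp add: fun_eq_iff rot_def inner_add_right mult.commute)
  ultimately have "(g has_derivative (\<lambda>v. inner (grad f q) d * fst v + inner (grad f q) (rot90 d) * snd v)) (at st)"
    by (simp add: g_def rot_def)
  from partials_of_has_derivative[OF this] show ?thesis
    using unit_vector_expansion[OF d, of "grad f q"] by (simp add: st_def)
qed

lemma has_bps_expansion_grad_factor:
  assumes g: "has_bps_expansion g a \<sigma>" and nz: "a i0 j0 \<noteq> 0" and axis: "\<And>i. a i 0 = 0"
  obtains m p q i1 where "bps_conv p \<sigma>" "bps_conv q \<sigma>"
    "\<And>st. st \<in> open_square \<sigma> \<Longrightarrow> px g st = snd st ^ m * bps p st \<and> py g st = snd st ^ m * bps q st"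
    "\<And>s. bps p (s,0) = 0" "q i1 0 \<noteq> 0"
proof -
  define n where "n = (LEAST j. \<exists>i. a i j \<noteq> 0)"
  obtain i1 where i1: "a i1 n \<noteq> 0" using LeastI[of "\<lambda>j. \<exists>i. a i j \<noteq> 0" j0] nz by (auto simp: n_def)
  have below: "a i j = 0" if "j < n" for i j using not_less_Least[OF that[unfolded n_def]] by auto
  have "n \<noteq> 0" using i1 axis by (intro notI) simp
  define m where "m = n - 1"
  have a: "bps_conv a \<sigma>" using g by (simp add: has_bps_expansion_def)
  define p where "p = (\<lambda>i j. bps_dx a i (j + m))"
  define q where "q = (\<lambda>i j. bps_dy a i (j + m))"
  have "bps_dx a i j = 0" "bps_dy a i j = 0" if "j < m" for i j
    using that below \<open>n \<noteq> 0\<close> by (simp_all add: bps_dx_def bps_dy_def m_def)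
  then have factor: "px g st = snd st ^ m * bps p st \<and> py g st = snd st ^ m * bps q st" if "st \<in> open_square \<sigma>" for st
    using has_bps_expansion_px[OF g] has_bps_expansion_py[OF g] that
      bps_factor_snd[OF bps_conv_dx[OF a]] bps_factor_snd[OF bps_conv_dy[OF a]]
    by (simp add: has_bps_expansion_def p_def q_def)
  show ?thesis
  proof (rule that[of p q m i1])
    show "bps_conv p \<sigma>" "bps_conv q \<sigma>"
      unfolding p_def q_def by (intro bps_conv_drop_snd bps_conv_dx bps_conv_dy a)+
    show "bps p (s,0) = 0" for s
      using below \<open>n \<noteq> 0\<close> by (intro bps_fst_axis_eq_0) (simp add: p_def bps_dx_def m_def)
    show "q i1 0 \<noteq> 0" using i1 \<open>n \<noteq> 0\<close> by (simp add: q_def bps_dy_def m_def)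
  qed (rule factor)
qed

lemma has_bps_expansion_frame_coordinates:
  assumes f: "has_bps_expansion f c \<rho>" and d: "norm d = 1"
  obtains b where "has_bps_expansion (\<lambda>x. f (inner x d, inner x (rot90 d))) b (\<rho> / 2)"
proof -
  have "\<bar>fst d\<bar> + \<bar>snd d\<bar> \<le> 2" "\<bar>- snd d\<bar> + \<bar>fst d\<bar> \<le> 2"
    using d norm_fst_le[of "fst d" "snd d"] norm_snd_le[of "snd d" "fst d"] by auto
  from has_bps_expansion_linear_subst[OF f _ this] obtain b
    where "has_bps_expansion (\<lambda>x. f (fst d * fst x + snd d * snd x, - snd d * fst x + fst d * snd x)) b (\<rho> / 2)"
    by auto
  moreover have "(inner x d, inner x (rot90 d)) = (fst d * fst x + snd d * snd x, - snd d * fst x + fst d * snd x)"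
    for x by (simp add: rot90_def inner_prod_def mult.commute)
  ultimately show ?thesis using that by simp
qed

lemma frame_lincomb_analytic:
  fixes \<alpha> \<beta> :: real
  assumes p: "bps_conv p \<sigma>" and q: "bps_conv q \<sigma>" and d: "norm d = 1"
  defines "F \<equiv> \<lambda>x. \<alpha> * bps p (inner x d, inner x (rot90 d)) + \<beta> * bps q (inner x d, inner x (rot90 d))"
  shows "real_analytic_on2 F (ball 0 (\<sigma> / 2))" and "\<And>x. x \<in> ball 0 (\<sigma> / 2) \<Longrightarrow> isCont F x"
proof -
  have "has_bps_expansion (\<lambda>st. \<alpha> * bps p st + \<beta> * bps q st) (\<lambda>i j. \<alpha> * p i j + \<beta> * q i j) \<sigma>"
    using p q by (intro has_bps_expansion_lincomb) (simp_all add: has_bps_expansion_def)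
  from has_bps_expansion_frame_coordinates[OF this d] obtain b where b: "has_bps_expansion F b (\<sigma> / 2)"
    unfolding F_def by blast
  show "real_analytic_on2 F (ball 0 (\<sigma> / 2))"
    by (rule real_analytic_on2_subset[OF has_bps_expansion_real_analytic_on2[OF b]])
       (simp_all add: ball_subset_open_square)
  show "isCont F x" if "x \<in> ball 0 (\<sigma> / 2)" for x
    using has_bps_expansion_isCont[OF b] that ball_subset_open_square by blast
qed

lemma frame_field_analytic:
  assumes p: "bps_conv p \<sigma>" and q: "bps_conv q \<sigma>" and d: "norm d = 1"
  defines "W \<equiv> \<lambda>x. bps p (inner x d, inner x (rot90 d)) *\<^sub>R d + bps q (inner x d, inner x (rot90 d)) *\<^sub>R rot90 d"
  shows "real_analytic_vf_on W (ball 0 (\<sigma> / 2))" and "\<And>x. x \<in> ball 0 (\<sigma> / 2) \<Longrightarrow> isCont W x"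
proof -
  have fst_W: "(\<lambda>x. fst (W x)) = (\<lambda>x. fst d * bps p (inner x d, inner x (rot90 d)) + fst (rot90 d) * bps q (inner x d, inner x (rot90 d)))"
    and snd_W: "(\<lambda>x. snd (W x)) = (\<lambda>x. snd d * bps p (inner x d, inner x (rot90 d)) + snd (rot90 d) * bps q (inner x d, inner x (rot90 d)))"
    by (simp_all add: W_def fun_eq_iff mult.commute)
  note fst_analytic = frame_lincomb_analytic[OF p q d, where \<alpha>="fst d" and \<beta>="fst (rot90 d)", folded fst_W]
  note snd_analytic = frame_lincomb_analytic[OF p q d, where \<alpha>="snd d" and \<beta>="snd (rot90 d)", folded snd_W]
  show "real_analytic_vf_on W (ball 0 (\<sigma> / 2))"
    unfolding real_analytic_vf_on_def using fst_analytic(1) snd_analytic(1) by simp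
  fix x :: "real \<times> real" assume "x \<in> ball 0 (\<sigma> / 2)"
  then have "isCont (\<lambda>x. (fst (W x), snd (W x))) x"
    using fst_analytic(2) snd_analytic(2) by (intro continuous_Pair)
  then show "isCont W x" by simp
qed

lemma has_bps_expansion_frame_vanishing_on_axis:
  assumes \<phi>: "has_bps_expansion \<phi> c \<rho>" "0 < \<rho>" and d: "norm d = 1"
    and \<delta>: "0 < \<delta>" and on_line: "\<And>s. \<bar>s\<bar> < \<delta> \<Longrightarrow> \<phi> (s *\<^sub>R d) = 0"
    and nonzero: "\<not> (\<exists>\<epsilon>>0. \<forall>q\<in>ball 0 \<epsilon>. \<phi> q = 0)"
  obtains a i0 j0 where "has_bps_expansion (\<lambda>st. \<phi> (fst st *\<^sub>R d + snd st *\<^sub>R rot90 d)) a (\<rho> / 2)"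
    "\<And>i. a i 0 = 0" "a i0 j0 \<noteq> 0"
proof -
  define \<psi> where "\<psi> = (\<lambda>st. \<phi> (fst st *\<^sub>R d + snd st *\<^sub>R rot90 d))"
  obtain a where \<psi>: "has_bps_expansion \<psi> a (\<rho> / 2)"
    using has_bps_expansion_rotate[OF \<phi>(1) d] unfolding \<psi>_def by blast
  have \<rho>2: "0 < \<rho> / 2" using \<phi>(2) by simp
  have axis: "a i 0 = 0" for i
  proof (rule bps_fst_axis_coeff_eq_0[of a "\<rho> / 2" "min (\<rho> / 2) \<delta>"])
    fix s :: real assume s: "\<bar>s\<bar> < min (\<rho> / 2) \<delta>"
    then have "(s, 0) \<in> open_square (\<rho> / 2)" using \<rho>2 by (simp add: open_square_def)
    then have "bps a (s, 0) = \<psi> (s, 0)" using \<psi> by (simp add: has_bps_expansion_def)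
    then show "bps a (s, 0) = 0" using on_line s by (simp add: \<psi>_def)
  qed (use \<psi> \<rho>2 \<delta> in \<open>simp_all add: has_bps_expansion_def\<close>)
  have "\<exists>i0 j0. a i0 j0 \<noteq> 0"
  proof (rule ccontr)
    assume "\<nexists>i0 j0. a i0 j0 \<noteq> 0"
    then have "a = (\<lambda>i j. 0)" by (auto simp: fun_eq_iff)
    have "\<phi> q = 0" if "q \<in> ball 0 (\<rho> / 2)" for q
    proof -
      have "\<psi> (inner q d, inner q (rot90 d)) = 0"
        using \<psi> \<open>a = (\<lambda>i j. 0)\<close> frame_in_open_square[OF d that] by (simp add: has_bps_expansion_def)
      then show ?thesis by (simp add: \<psi>_def flip: unit_vector_expansion[OF d])
    qed
    then show False using nonzero \<rho>2 by blast
  qed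
  then show ?thesis using that \<psi> axis unfolding \<psi>_def by blast
qed

text \<open>The factor \<open>g\<close> is a power of the second frame coordinate, and on the line \<open>W\<close> is a multiple
  of \<open>rot90 d\<close> whose coefficient is a nonzero power series in the first coordinate.\<close>
lemma gradient_direction_across_zero_line:
  assumes \<phi>: "has_bps_expansion \<phi> c \<rho>" "0 < \<rho>" and d: "norm d = 1"
    and \<delta>: "0 < \<delta>" and on_line: "\<And>s. \<bar>s\<bar> < \<delta> \<Longrightarrow> \<phi> (s *\<^sub>R d) = 0"
    and nonzero: "\<not> (\<exists>\<epsilon>>0. \<forall>q\<in>ball 0 \<epsilon>. \<phi> q = 0)"
  obtains r g W where "0 < r" "r \<le> \<rho>" "\<And>q. q \<in> ball 0 r \<Longrightarrow> grad \<phi> q = g q *\<^sub>R W q"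
    "real_analytic_vf_on W (ball 0 r)" "\<And>q. q \<in> ball 0 r \<Longrightarrow> isCont W q"
    "\<And>s. 0 < \<bar>s\<bar> \<Longrightarrow> \<bar>s\<bar> < r \<Longrightarrow> W (s *\<^sub>R d) \<noteq> 0 \<and> inner (W (s *\<^sub>R d)) d = 0"
proof -
  define e where "e = rot90 d"
  define \<psi> where "\<psi> = (\<lambda>st. \<phi> (fst st *\<^sub>R d + snd st *\<^sub>R e))"
  define frame where "frame = (\<lambda>q. (inner q d, inner q e))"
  have e: "inner d e = 0" "inner e d = 0" "inner d d = 1" "e \<noteq> 0"
    using d by (simp_all add: e_def dot_square_norm) (metis norm_rot90 norm_zero zero_neq_one)
  obtain a i0 j0 where \<psi>: "has_bps_expansion \<psi> a (\<rho> / 2)" and "\<And>i. a i 0 = 0" "a i0 j0 \<noteq> 0"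
    using has_bps_expansion_frame_vanishing_on_axis[OF \<phi> d \<delta> on_line nonzero] unfolding \<psi>_def e_def by blast
  then obtain p q m i1 where p: "bps_conv p (\<rho> / 2)" and q: "bps_conv q (\<rho> / 2)"
    and factor: "\<And>st. st \<in> open_square (\<rho> / 2) \<Longrightarrow> px \<psi> st = snd st ^ m * bps p st \<and> py \<psi> st = snd st ^ m * bps q st"
    and p_axis: "\<And>s. bps p (s,0) = 0" and q_axis: "q i1 0 \<noteq> 0"
    using has_bps_expansion_grad_factor[OF \<psi>] by metis
  obtain \<epsilon> where \<epsilon>: "0 < \<epsilon>" "\<And>s. 0 < \<bar>s\<bar> \<Longrightarrow> \<bar>s\<bar> < \<epsilon> \<Longrightarrow> bps q (s,0) \<noteq> 0"
    using bps_fst_axis_nonzero[OF q _ q_axis] \<phi>(2) by auto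
  define W where "W = (\<lambda>x. bps p (frame x) *\<^sub>R d + bps q (frame x) *\<^sub>R e)"
  define r where "r = min (\<rho> / 4) \<epsilon>"
  have r: "0 < r" "r \<le> \<rho> / 4" using \<phi>(2) \<epsilon> by (auto simp: r_def)
  have W_analytic: "real_analytic_vf_on W (ball 0 (\<rho> / 4))" "\<And>x. x \<in> ball 0 (\<rho> / 4) \<Longrightarrow> isCont W x"
    using frame_field_analytic[OF p q d] by (simp_all add: W_def frame_def e_def)
  have "grad \<phi> x = (inner x e ^ m) *\<^sub>R W x" if x: "x \<in> ball 0 r" for x
  proof -
    have "norm x < r" using x by simp
    then have "norm x < \<rho> / 2" "norm x < \<rho>" using r norm_ge_zero[of x] by linarith+
    then have "x \<in> ball 0 (\<rho> / 2)" "x \<in> open_square \<rho>"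
      using ball_subset_open_square[of \<rho>] by auto
    from grad_in_rotated_frame[OF d has_bps_expansion_has_derivative_grad[OF \<phi>(1) this(2)]]
      factor[OF frame_in_open_square[OF d this(1)]]
    show ?thesis by (simp add: W_def frame_def \<psi>_def e_def scaleR_add_right)
  qed
  moreover have "W (s *\<^sub>R d) = bps q (s,0) *\<^sub>R e" for s
    using d e p_axis by (simp add: W_def frame_def)
  then have "W (s *\<^sub>R d) \<noteq> 0 \<and> inner (W (s *\<^sub>R d)) d = 0" if "0 < \<bar>s\<bar>" "\<bar>s\<bar> < r" for s
    using \<epsilon>(2)[of s] that e by (auto simp: r_def)
  moreover have "real_analytic_vf_on W (ball 0 r)"
    by (rule real_analytic_vf_on_subset[OF W_analytic(1) open_ball subset_ball[OF r(2)]])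
  moreover have "isCont W x" if "x \<in> ball 0 r" for x
    using W_analytic(2) subset_ball[OF r(2)] that by blast
  ultimately show ?thesis using that[of r "\<lambda>x. inner x e ^ m" W] r by force
qed

text \<open>Where the gradient vanishes, the line field is the span of the analytic field \<open>W\<close> itself;
  elsewhere the gradient is a nonzero multiple of \<open>W\<close>.\<close>
lemma line_field_extension:
  fixes G W :: "real \<times> real \<Rightarrow> real \<times> real" and \<Gamma> :: "(real \<times> real) set"
  assumes r: "0 < r" "r \<le> R" and d: "norm d = 1" and \<Gamma>: "\<Gamma> \<subseteq> range (\<lambda>t. t *\<^sub>R d)"
    and G: "\<And>q. q \<in> ball 0 r \<Longrightarrow> G q = g q *\<^sub>R W q"
    and W: "real_analytic_vf_on W (ball 0 r)" "\<And>q. q \<in> ball 0 r \<Longrightarrow> isCont W q"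
    and W_line: "\<And>s. 0 < \<bar>s\<bar> \<Longrightarrow> \<bar>s\<bar> < r \<Longrightarrow> W (s *\<^sub>R d) \<noteq> 0 \<and> inner (W (s *\<^sub>R d)) d = 0"
  shows "\<exists>r>0. r \<le> R \<and> (\<exists>L :: real \<times> real \<Rightarrow> (real \<times> real) set.
          (\<forall>q\<in>ball 0 r. G q \<noteq> 0 \<longrightarrow> L q = span {G q}) \<and>
          (\<forall>p\<in>\<Gamma> \<inter> ball 0 r. p \<noteq> 0 \<longrightarrow>
             (\<exists>U W. open U \<and> p \<in> U \<and> U \<subseteq> ball 0 r \<and>
                real_analytic_vf_on W U \<and> (\<forall>q\<in>U. W q \<noteq> 0) \<and>
                (\<forall>q\<in>U. G q \<noteq> 0 \<or> q \<in> \<Gamma> - {0} \<longrightarrow> L q = span {W q}) \<and>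
                inner (W p) d = 0)))"
proof (intro exI[of _ r] conjI r exI[of _ "\<lambda>q. if G q \<noteq> 0 then span {G q} else span {W q}"] ballI impI)
  fix p assume p: "p \<in> \<Gamma> \<inter> ball 0 r" "p \<noteq> 0"
  have Wp: "W p \<noteq> 0 \<and> inner (W p) d = 0"
  proof -
    obtain t where "p = t *\<^sub>R d" using p(1) \<Gamma> by auto
    moreover have "0 < \<bar>t\<bar>" "\<bar>t\<bar> < r" using p d \<open>p = t *\<^sub>R d\<close> by auto
    ultimately show ?thesis using W_line by blast
  qed
  obtain \<epsilon> where \<epsilon>: "0 < \<epsilon>" "\<And>y. dist p y < \<epsilon> \<Longrightarrow> W y \<noteq> 0"
    using continuous_at_avoid[OF W(2)] p Wp by blast
  obtain \<epsilon>' where \<epsilon>': "0 < \<epsilon>'" "ball p \<epsilon>' \<subseteq> ball 0 r"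
    using p(1) open_contains_ball[of "ball 0 r"] by blast
  define U where "U = ball p (min \<epsilon> \<epsilon>')"
  have U: "open U" "p \<in> U" "U \<subseteq> ball 0 r" using \<epsilon> \<epsilon>' by (auto simp: U_def)
  show "\<exists>U W'. open U \<and> p \<in> U \<and> U \<subseteq> ball 0 r \<and> real_analytic_vf_on W' U \<and> (\<forall>q\<in>U. W' q \<noteq> 0) \<and>
      (\<forall>q\<in>U. G q \<noteq> 0 \<or> q \<in> \<Gamma> - {0} \<longrightarrow> (if G q \<noteq> 0 then span {G q} else span {W q}) = span {W' q}) \<and>
      inner (W' p) d = 0"
  proof (intro exI[of _ U] exI[of _ W] conjI ballI impI U)
    show "real_analytic_vf_on W U" by (rule real_analytic_vf_on_subset[OF W(1) U(1,3)])
    show "W q \<noteq> 0" if "q \<in> U" for q using that \<epsilon>(2) by (auto simp: U_def)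
    show "(if G q \<noteq> 0 then span {G q} else span {W q}) = span {W q}" if "q \<in> U" for q
      using that U(3) G[of q] span_scaleR_singleton[of "g q" "W q"] by auto
    show "inner (W p) d = 0" using Wp by blast
  qed
qed simp

theorem lemma4p4:
  fixes h :: "real \<times> real \<Rightarrow> real"
    and R :: real
    and d :: "real \<times> real"
    and a b :: real
  defines "\<Omega> \<equiv> ball (0::real \<times> real) R"
    and "\<Gamma> \<equiv> (\<lambda>t. t *\<^sub>R d) ` {-a..b}"
  assumes "R > 0"
    and analytic: "real_analytic_on2 h \<Omega>"
    and not_affine: "\<not> affine_linear_on h \<Omega>"
    and hess_sign: "\<forall>p\<in>\<Omega>. px (px h) p * py (py h) p - (py (px h) p)\<^sup>2 \<le> 0"
    and "h 0 = 0"
    and "grad h 0 = 0"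
    and "norm d = 1" and "a > 0" and "b > 0"
    and "\<Gamma> \<subseteq> \<Omega>"
    and "\<forall>p\<in>\<Gamma>. hessian_zero_at h p"
  shows "\<forall>\<nu>::real \<times> real. norm \<nu> = 1 \<and> \<nu> \<notin> span {d} \<longrightarrow>
     \<not> (\<forall>q\<in>\<Omega>. grad (dirderiv h \<nu>) q = 0) \<and>
     (\<exists>r>0. r \<le> R \<and>
       (\<exists>L :: real \<times> real \<Rightarrow> (real \<times> real) set.
          (\<forall>q\<in>ball 0 r. grad (dirderiv h \<nu>) q \<noteq> 0 \<longrightarrow>
                L q = span {grad (dirderiv h \<nu>) q}) \<and>
          (\<forall>p\<in>\<Gamma> \<inter> ball 0 r. p \<noteq> 0 \<longrightarrow>
             (\<exists>U W. open U \<and> p \<in> U \<and> U \<subseteq> ball 0 r \<and>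
                real_analytic_vf_on W U \<and> (\<forall>q\<in>U. W q \<noteq> 0) \<and>
                (\<forall>q\<in>U. grad (dirderiv h \<nu>) q \<noteq> 0 \<or> q \<in> \<Gamma> - {0} \<longrightarrow>
                       L q = span {W q}) \<and>
                inner (W p) d = 0))))"
  apply (intro allI impI)
  subgoal premises \<nu> for \<nu>
  proof -
    have "0 \<in> \<Omega>" "0 < min R (min a b)" using \<open>R > 0\<close> \<open>a > 0\<close> \<open>b > 0\<close> by (simp_all add: \<Omega>_def)
    then obtain c \<delta> where \<delta>: "0 < \<delta>" "\<delta> \<le> min R (min a b)" and h_exp: "has_bps_expansion h c \<delta>"
      using real_analytic_on2_expansion_near_0[OF analytic] by blast
    have grad_h: "grad h (s *\<^sub>R d) = 0" if "\<bar>s\<bar> < \<delta>" for s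
    proof (rule grad_eq_0_on_segment[OF h_exp \<open>norm d = 1\<close> order_refl _ \<open>grad h 0 = 0\<close> that])
      show "hessian_zero_at h (t *\<^sub>R d)" if "\<bar>t\<bar> < \<delta>" for t
        using that \<delta> \<open>\<forall>p\<in>\<Gamma>. hessian_zero_at h p\<close> by (auto simp: \<Gamma>_def abs_less_iff)
    qed
    define \<phi> where "\<phi> = dirderiv h \<nu>"
    have \<phi>_exp: "has_bps_expansion \<phi> (\<lambda>i j. fst \<nu> * bps_dx c i j + snd \<nu> * bps_dy c i j) \<delta>"
      unfolding \<phi>_def by (rule has_bps_expansion_dirderiv[OF h_exp])
    have \<phi>_line: "\<phi> (s *\<^sub>R d) = 0" if "\<bar>s\<bar> < \<delta>" for s
      using grad_h[OF that] by (simp add: \<phi>_def dirderiv_def)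
    have nonzero: "\<not> (\<exists>\<epsilon>>0. \<forall>q\<in>ball 0 \<epsilon>. \<phi> q = 0)"
      unfolding \<phi>_def using \<nu> analytic not_affine
      by (intro dirderiv_not_eq_0_near_0[OF _ _ h_exp \<delta>(1) \<open>h 0 = 0\<close> \<open>norm d = 1\<close> _ _ grad_h])
         (simp_all add: \<Omega>_def)
    have part1: "\<not> (\<forall>q\<in>\<Omega>. grad \<phi> q = 0)"
      using grad_not_eq_0_on_ball[OF \<phi>_exp \<delta>(1) _ nonzero] \<phi>_line[of 0] \<delta> by (auto simp: \<Omega>_def)
    obtain r g W where r: "0 < r" "r \<le> \<delta>" and grad: "\<And>q. q \<in> ball 0 r \<Longrightarrow> grad \<phi> q = g q *\<^sub>R W q"
      and W: "real_analytic_vf_on W (ball 0 r)" "\<And>q. q \<in> ball 0 r \<Longrightarrow> isCont W q"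
      and W_line: "\<And>s. 0 < \<bar>s\<bar> \<Longrightarrow> \<bar>s\<bar> < r \<Longrightarrow> W (s *\<^sub>R d) \<noteq> 0 \<and> inner (W (s *\<^sub>R d)) d = 0"
      using gradient_direction_across_zero_line[OF \<phi>_exp \<delta>(1) \<open>norm d = 1\<close> \<delta>(1) \<phi>_line nonzero] by metis
    have \<Gamma>_line: "\<Gamma> \<subseteq> range (\<lambda>t. t *\<^sub>R d)" by (auto simp: \<Gamma>_def)
    show ?thesis
      unfolding \<phi>_def[symmetric]
      by (intro conjI part1 line_field_extension[OF r(1) _ \<open>norm d = 1\<close> \<Gamma>_line grad W W_line]) (use r \<delta> in simp)
  qed
  done

end
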